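(* Suppose that $A_1,\dots,A_d$ are continuous functions of bounded variation on $[0,1]$, $f\in C[0,1]$, and $g_1,\dots,g_d\in C([0,1]\times\mathbb{R})$ satisfy a linear growth condition, i.e. there is $c\ge0$ with $|g_i(t,\xi)|\le c(1+|\xi|)$ for all $i$, $t\in[0,1]$, $\xi\in\mathbb{R}$. Then there exists at least one solution $B\in C[0,1]$ of the Stieltjes integral equation $$B(t)=f(t)+\sum_{i=1}^d\int_0^tg_i(s,B(s))\,dA_i(s),\qquad 0\le t\le1.$$ Moreover, this solution is unique if $g_1,\dots,g_d$ in addition satisfy a local Lipschitz condition: for each $p>0$ there is $L_p\ge0$ with $|g_i(t,\xi)-g_i(t,\zeta)|\le L_p|\xi-\zeta|$ for all $i$, $\xi,\zeta\in[-p,p]$, $t\in[0,1]$.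
   Context: The integrals are Riemann--Stieltjes integrals. *)

theory Defs
  imports "HOL-Analysis.Analysis"
begin

definition is_partition :: "real \<Rightarrow> real \<Rightarrow> nat \<Rightarrow> (nat \<Rightarrow> real) \<Rightarrow> bool" where
  "is_partition a b n x \<longleftrightarrow> x 0 = a \<and> x n = b \<and> (\<forall>k<n. x k \<le> x (Suc k))"

definition bounded_variation_on :: "(real \<Rightarrow> real) \<Rightarrow> real \<Rightarrow> real \<Rightarrow> bool" where
  "bounded_variation_on A a b \<longleftrightarrow>
     (\<exists>M. \<forall>n x. is_partition a b n x \<longrightarrow> (\<Sum>k<n. \<bar>A (x (Suc k)) - A (x k)\<bar>) \<le> M)"

definition has_RS_integral :: "(real \<Rightarrow> real) \<Rightarrow> (real \<Rightarrow> real) \<Rightarrow> real \<Rightarrow> real \<Rightarrow> real \<Rightarrow> bool" where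
  "has_RS_integral f A a b I \<longleftrightarrow>
     (\<forall>\<epsilon>>0. \<exists>\<delta>>0. \<forall>n x \<xi>. is_partition a b n x \<and> (\<forall>k<n. x (Suc k) - x k < \<delta>)
        \<and> (\<forall>k<n. x k \<le> \<xi> k \<and> \<xi> k \<le> x (Suc k))
        \<longrightarrow> \<bar>(\<Sum>k<n. f (\<xi> k) * (A (x (Suc k)) - A (x k))) - I\<bar> < \<epsilon>)"

definition RS_integrable :: "(real \<Rightarrow> real) \<Rightarrow> (real \<Rightarrow> real) \<Rightarrow> real \<Rightarrow> real \<Rightarrow> bool" where
  "RS_integrable f A a b \<longleftrightarrow> (\<exists>I. has_RS_integral f A a b I)"

definition RS_integral :: "(real \<Rightarrow> real) \<Rightarrow> (real \<Rightarrow> real) \<Rightarrow> real \<Rightarrow> real \<Rightarrow> real" where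
  "RS_integral f A a b = (THE I. has_RS_integral f A a b I)"

definition is_solution ::
  "nat \<Rightarrow> (nat \<Rightarrow> real \<Rightarrow> real) \<Rightarrow> (real \<Rightarrow> real) \<Rightarrow> (nat \<Rightarrow> real \<Rightarrow> real \<Rightarrow> real) \<Rightarrow> (real \<Rightarrow> real) \<Rightarrow> bool" where
  "is_solution d A f g B \<longleftrightarrow>
     (\<forall>t\<in>{0..1}. (\<forall>i<d. RS_integrable (\<lambda>s. g i s (B s)) (A i) 0 t) \<and>
        B t = f t + (\<Sum>i<d. RS_integral (\<lambda>s. g i s (B s)) (A i) 0 t))"

end

theory Submission
  imports Defs "HOL-Complex_Analysis.Great_Picard"
begin

text \<open>Each \<open>A\<^sub>i\<close> splits as \<open>P\<^sub>i - N\<^sub>i\<close> with \<open>P\<^sub>i, N\<^sub>i\<close> continuous and nondecreasing (Jordan), and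
  for such an integrator \<open>\<integral>\<^sub>0\<^sup>t \<phi> dP\<close> is the ordinary integral of \<open>\<phi> \<circ> P\<^sup>-\<^sup>1\<close> over \<open>[P 0, P t]\<close>.
  Existence follows Tonelli: the equation with delayed argument \<open>B (s - \<delta>)\<close> is solved by
  finitely many forward steps; a Gronwall bound with weight \<open>exp ((2c + 1) W)\<close>, where \<open>W\<close> is the
  sum of all \<open>P\<^sub>i\<close> and \<open>N\<^sub>i\<close>, bounds these solutions uniformly, the integrals make them
  equicontinuous, and by Arzela--Ascoli a subsequence converges uniformly to a solution as
  \<open>\<delta> \<rightarrow> 0\<close>.  For uniqueness, the difference \<open>D\<close> of two solutions satisfies
  \<open>D \<le> L \<integral> D dW\<close>, and the same Gronwall argument gives \<open>D = 0\<close>.\<close>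

section \<open>Total variation and the Jordan decomposition\<close>

definition variation_sum :: "(real \<Rightarrow> real) \<Rightarrow> nat \<Rightarrow> (nat \<Rightarrow> real) \<Rightarrow> real" where
  "variation_sum A n x = (\<Sum>k<n. \<bar>A (x (Suc k)) - A (x k)\<bar>)"

definition total_variation :: "(real \<Rightarrow> real) \<Rightarrow> real \<Rightarrow> real \<Rightarrow> real" where
  "total_variation A a b = Sup {variation_sum A n x | n x. is_partition a b n x}"

lemma partition_mono:
  assumes "is_partition a b n x" "j \<le> k" "k \<le> n"
  shows "x j \<le> x k"
  using assms(2,3)
proof (induction k)
  case (Suc k)
  show ?case
  proof (cases "j = Suc k")
    case False
    then have "x j \<le> x k" using Suc by simp
    moreover have "x k \<le> x (Suc k)" using assms(1) Suc(3) unfolding is_partition_def by simp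
    ultimately show ?thesis by simp
  qed simp
qed simp

lemma partition_bounds:
  assumes "is_partition a b n x" "k \<le> n"
  shows "a \<le> x k" "x k \<le> b"
  using partition_mono[OF assms(1), of 0 k] partition_mono[OF assms(1), of k n] assms
  unfolding is_partition_def by auto

lemma is_partition_trivial: "a \<le> b \<Longrightarrow> is_partition a b 1 (\<lambda>k. if k = 0 then a else b)"
  unfolding is_partition_def by auto

lemma variation_sum_trivial: "variation_sum A 1 (\<lambda>k. if k = 0 then a else b) = \<bar>A b - A a\<bar>"
  unfolding variation_sum_def by simp

lemma partition_append:
  assumes "is_partition a b n x" "is_partition b c m y"
  shows "is_partition a c (n + m) (\<lambda>k. if k \<le> n then x k else y (k - n))"
    and "variation_sum A (n + m) (\<lambda>k. if k \<le> n then x k else y (k - n))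
           = variation_sum A n x + variation_sum A m y"
proof -
  let ?z = "\<lambda>k. if k \<le> n then x k else y (k - n)"
  have z: "?z (n + j) = y j" for j
    using assms unfolding is_partition_def by auto
  show "is_partition a c (n + m) ?z"
    unfolding is_partition_def
  proof (intro conjI allI impI)
    show "?z 0 = a" "?z (n + m) = c" using z[of m] assms unfolding is_partition_def by auto
    fix k assume k: "k < n + m"
    show "?z k \<le> ?z (Suc k)"
    proof (cases "k < n")
      case True then show ?thesis using assms unfolding is_partition_def by auto
    next
      case False
      define j where "j = k - n"
      have j: "k = n + j" "j < m" using k False unfolding j_def by auto
      have "y j \<le> y (Suc j)" using assms(2) j(2) unfolding is_partition_def by simp
      then show ?thesis using z[of j] z[of "Suc j"] j(1) assms unfolding is_partition_def by auto
    qed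
  qed
  have "variation_sum A (n + j) ?z = variation_sum A n x + variation_sum A j y" for j
  proof (induction j)
    case (Suc j)
    have "variation_sum A (n + Suc j) ?z = variation_sum A (n + j) ?z + \<bar>A (?z (Suc (n + j))) - A (?z (n + j))\<bar>"
      unfolding variation_sum_def by simp
    also have "\<dots> = variation_sum A n x + variation_sum A j y + \<bar>A (y (Suc j)) - A (y j)\<bar>"
      using Suc z[of j] z[of "Suc j"] by simp
    finally show ?case unfolding variation_sum_def by simp
  qed (simp add: variation_sum_def)
  then show "variation_sum A (n + m) ?z = variation_sum A n x + variation_sum A m y" .
qed

lemma partition_split:
  assumes "is_partition a c n x" "a \<le> b" "b \<le> c"
  shows "is_partition a b n (\<lambda>k. min (x k) b)" "is_partition b c n (\<lambda>k. max (x k) b)"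
    "variation_sum A n x \<le> variation_sum A n (\<lambda>k. min (x k) b) + variation_sum A n (\<lambda>k. max (x k) b)"
proof -
  show "is_partition a b n (\<lambda>k. min (x k) b)" "is_partition b c n (\<lambda>k. max (x k) b)"
    using assms unfolding is_partition_def by (auto simp: min_def max_def)
  have "\<bar>A (x (Suc k)) - A (x k)\<bar> \<le> \<bar>A (min (x (Suc k)) b) - A (min (x k) b)\<bar>
     + \<bar>A (max (x (Suc k)) b) - A (max (x k) b)\<bar>" if "k < n" for k
  proof -
    have "x k \<le> x (Suc k)" using assms(1) that unfolding is_partition_def by auto
    then show ?thesis by (cases "x (Suc k) \<le> b"; cases "b \<le> x k") (auto simp: min_def max_def)
  qed
  then show "variation_sum A n x \<le> variation_sum A n (\<lambda>k. min (x k) b) + variation_sum A n (\<lambda>k. max (x k) b)"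
    unfolding variation_sum_def sum.distrib[symmetric] by (intro sum_mono) auto
qed

lemma variation_sum_two_valued:
  assumes yv: "\<And>k. k \<le> n \<Longrightarrow> y k = p \<or> y k = q" and pq: "p < q"
    and ym: "\<And>k. k < n \<Longrightarrow> y k \<le> y (Suc k)" and y0: "y 0 = p" and yn: "y n = q"
  shows "variation_sum A n y = \<bar>A q - A p\<bar>"
proof -
  define c where "c = \<bar>A q - A p\<bar> / (q - p)"
  have t: "\<bar>A (y (Suc k)) - A (y k)\<bar> = c * (y (Suc k) - y k)" if "k < n" for k
  proof -
    have "y k = p \<or> y k = q" "y (Suc k) = p \<or> y (Suc k) = q" using yv that by auto
    moreover have "y k \<le> y (Suc k)" using ym that by auto
    ultimately show ?thesis using pq unfolding c_def by auto
  qed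
  have "variation_sum A n y = (\<Sum>k<n. c * (y (Suc k) - y k))" unfolding variation_sum_def using t by simp
  also have "\<dots> = c * (y n - y 0)" by (simp add: sum_distrib_left[symmetric] sum_lessThan_telescope)
  also have "\<dots> = \<bar>A q - A p\<bar>" using pq y0 yn unfolding c_def by simp
  finally show ?thesis .
qed

lemma continuous_on_Icc_uniformly:
  fixes \<phi> :: "real \<Rightarrow> real"
  assumes "continuous_on {a..b} \<phi>" "e > 0"
  obtains d where "d > 0" "\<And>x y. x \<in> {a..b} \<Longrightarrow> y \<in> {a..b} \<Longrightarrow> \<bar>x - y\<bar> < d \<Longrightarrow> \<bar>\<phi> x - \<phi> y\<bar> < e"
proof -
  have "uniformly_continuous_on {a..b} \<phi>"
    using compact_uniformly_continuous[OF assms(1)] by simp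
  then obtain d where "d > 0" "\<forall>x\<in>{a..b}. \<forall>x'\<in>{a..b}. dist x' x < d \<longrightarrow> dist (\<phi> x') (\<phi> x) < e"
    unfolding uniformly_continuous_on_def using assms(2) by metis
  then show ?thesis using that by (auto simp: dist_real_def)
qed

lemma continuous_on_Icc_bounded:
  fixes \<phi> :: "real \<Rightarrow> real"
  assumes "continuous_on {a..b} \<phi>"
  obtains K where "K \<ge> 0" "\<And>s. s \<in> {a..b} \<Longrightarrow> \<bar>\<phi> s\<bar> \<le> K"
proof -
  have "compact (\<phi> ` {a..b})" using compact_continuous_image[OF assms] by simp
  then obtain K where "K > 0" "\<forall>x\<in>\<phi> ` {a..b}. norm x \<le> K"
    using compact_imp_bounded bounded_pos by metis
  then show ?thesis using that[of K] by auto
qed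

locale bounded_variation =
  fixes A :: "real \<Rightarrow> real" and lo hi :: real
  assumes bv: "bounded_variation_on A lo hi"
begin

lemma variation_sum_le_total_variation:
  assumes "lo \<le> a" "a \<le> b" "b \<le> hi" "is_partition a b n x"
  shows "variation_sum A n x \<le> total_variation A a b"
proof -
  obtain V where V: "\<And>n x. is_partition lo hi n x \<Longrightarrow> variation_sum A n x \<le> V"
    using bv unfolding bounded_variation_on_def variation_sum_def by blast
  have "variation_sum A n x \<le> V - variation_sum A 1 (\<lambda>k. if k = 0 then lo else a)
          - variation_sum A 1 (\<lambda>k. if k = 0 then b else hi)"
    if "is_partition a b n x" for n x
  proof -
    note p = partition_append[OF is_partition_trivial[of lo a] that]
    note q = partition_append[OF p(1) is_partition_trivial[of b hi]]
    show ?thesis using V[OF q(1)] p(2)[of A] q(2)[of A] assms by simp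
  qed
  then have "bdd_above {variation_sum A n x | n x. is_partition a b n x}"
    unfolding bdd_above_def by blast
  then show ?thesis unfolding total_variation_def using assms(4) by (intro cSup_upper) blast+
qed

lemma partitions_nonempty: "a \<le> b \<Longrightarrow> {variation_sum A n x | n x. is_partition a b n x} \<noteq> {}"
  using is_partition_trivial by blast

lemma abs_diff_le_total_variation:
  assumes "lo \<le> a" "a \<le> b" "b \<le> hi"
  shows "\<bar>A b - A a\<bar> \<le> total_variation A a b"
  using variation_sum_le_total_variation[OF assms is_partition_trivial[OF assms(2)]]
    variation_sum_trivial[of A a b] by simp

lemma total_variation_nonneg:
  assumes "lo \<le> a" "a \<le> b" "b \<le> hi"
  shows "0 \<le> total_variation A a b"
  using abs_diff_le_total_variation[OF assms] by linarith

lemma total_variation_superadditive: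
  assumes "lo \<le> a" "a \<le> b" "b \<le> c" "c \<le> hi"
  shows "total_variation A a b + total_variation A b c \<le> total_variation A a c"
proof -
  have sum_le: "variation_sum A n x + variation_sum A m y \<le> total_variation A a c"
    if "is_partition a b n x" "is_partition b c m y" for n x m y
    using partition_append(2)[OF that, of A]
      variation_sum_le_total_variation[OF _ _ _ partition_append(1)[OF that]] assms by auto
  have "variation_sum A n x \<le> total_variation A a c - total_variation A b c"
    if "is_partition a b n x" for n x
  proof -
    have "total_variation A b c \<le> total_variation A a c - variation_sum A n x"
      unfolding total_variation_def[of A b c]
    proof (rule cSup_least)
      fix s assume "s \<in> {variation_sum A m y | m y. is_partition b c m y}"
      then show "s \<le> total_variation A a c - variation_sum A n x" using sum_le[OF that] by force
    qed (use partitions_nonempty[of b c] assms in auto)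
    then show ?thesis by simp
  qed
  then have "total_variation A a b \<le> total_variation A a c - total_variation A b c"
    unfolding total_variation_def[of A a b]
    by (intro cSup_least) (use partitions_nonempty[of a b] assms in auto)
  then show ?thesis by simp
qed

lemma total_variation_subadditive:
  assumes "lo \<le> a" "a \<le> b" "b \<le> c" "c \<le> hi"
  shows "total_variation A a c \<le> total_variation A a b + total_variation A b c"
  unfolding total_variation_def[of A a c]
proof (rule cSup_least)
  show "{variation_sum A n x | n x. is_partition a c n x} \<noteq> {}"
    using partitions_nonempty assms by auto
  fix s assume "s \<in> {variation_sum A n x | n x. is_partition a c n x}"
  then obtain n x where s: "s = variation_sum A n x" and p: "is_partition a c n x" by auto
  note sp = partition_split[OF p assms(2,3)]
  have "variation_sum A n (\<lambda>k. min (x k) b) \<le> total_variation A a b"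
    by (rule variation_sum_le_total_variation[OF _ _ _ sp(1)]) (use assms in auto)
  moreover have "variation_sum A n (\<lambda>k. max (x k) b) \<le> total_variation A b c"
    by (rule variation_sum_le_total_variation[OF _ _ _ sp(2)]) (use assms in auto)
  ultimately show "s \<le> total_variation A a b + total_variation A b c"
    using s sp(3)[of A] by linarith
qed

lemma total_variation_additive:
  assumes "lo \<le> a" "a \<le> b" "b \<le> c" "c \<le> hi"
  shows "total_variation A a c = total_variation A a b + total_variation A b c"
  using total_variation_superadditive[OF assms] total_variation_subadditive[OF assms] by simp

lemma total_variation_refl: "lo \<le> a \<Longrightarrow> a \<le> hi \<Longrightarrow> total_variation A a a = 0"
  using total_variation_additive[of a a a] total_variation_nonneg[of a a] by simp

lemma total_variation_approx:
  assumes "a \<le> b" "e > 0"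
  obtains n x where "is_partition a b n x" "total_variation A a b - e < variation_sum A n x"
proof -
  have "\<not> (\<forall>n x. is_partition a b n x \<longrightarrow> variation_sum A n x \<le> total_variation A a b - e)"
  proof
    assume "\<forall>n x. is_partition a b n x \<longrightarrow> variation_sum A n x \<le> total_variation A a b - e"
    then have "total_variation A a b \<le> total_variation A a b - e"
      unfolding total_variation_def[of A a b]
      by (intro cSup_least) (use partitions_nonempty[of a b] assms in auto)
    then show False using assms by simp
  qed
  then show ?thesis using that by force
qed

text \<open>Right continuity of the variation: refine a nearly optimal partition of \<open>[t\<^sub>0, hi]\<close> by a point
  \<open>t\<^sub>1\<close> so close to \<open>t\<^sub>0\<close> that no old point lies in \<open>(t\<^sub>0, t\<^sub>1)\<close>; on \<open>[t\<^sub>0, t\<^sub>1]\<close> the partition then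
  only sees \<open>|A t\<^sub>1 - A t\<^sub>0|\<close>, which is small by continuity.\<close>
lemma total_variation_small_right:
  assumes cont: "continuous_on {lo..hi} A" and t0: "lo \<le> t0" "t0 < hi" and e: "e > 0"
  shows "\<exists>t1. t0 < t1 \<and> t1 \<le> hi \<and> total_variation A t0 t1 \<le> e"
proof -
  obtain d where d: "d > 0"
    "\<And>x y. x \<in> {lo..hi} \<Longrightarrow> y \<in> {lo..hi} \<Longrightarrow> \<bar>x - y\<bar> < d \<Longrightarrow> \<bar>A x - A y\<bar> < e/2"
    using continuous_on_Icc_uniformly[OF cont, of "e/2"] e by auto
  obtain n x where p: "is_partition t0 hi n x" and px: "total_variation A t0 hi - e/2 < variation_sum A n x"
    using total_variation_approx[of t0 hi "e/2"] t0 e by auto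
  define T where "T = {x k | k. k \<le> n \<and> x k > t0}"
  have fT: "finite T" unfolding T_def by simp
  have "hi \<in> T" unfolding T_def using p t0 unfolding is_partition_def by auto
  then have "T \<noteq> {}" by blast
  define m where "m = Min T"
  have m: "m > t0" "m \<le> hi"
    using Min_in[OF fT \<open>T \<noteq> {}\<close>] Min_le[OF fT \<open>hi \<in> T\<close>] unfolding m_def T_def by auto
  define t1 where "t1 = min (t0 + d/2) m"
  have t1: "t0 < t1" "t1 \<le> hi" "t1 < t0 + d" using m d unfolding t1_def by auto
  have two_valued: "min (x k) t1 = t0 \<or> min (x k) t1 = t1" if "k \<le> n" for k
  proof (cases "x k > t0")
    case True
    then have "x k \<in> T" unfolding T_def using that by auto
    then have "x k \<ge> m" unfolding m_def using fT by auto
    then show ?thesis unfolding t1_def by auto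
  next
    case False then show ?thesis using partition_bounds[OF p that] t1 by auto
  qed
  have ps: "variation_sum A n (\<lambda>k. min (x k) t1) = \<bar>A t1 - A t0\<bar>"
    by (rule variation_sum_two_valued) (use two_valued t1 p in \<open>auto simp: is_partition_def\<close>)
  have "\<bar>A t1 - A t0\<bar> < e/2" using d(2)[of t1 t0] t0 t1 by auto
  moreover note sp = partition_split[OF p less_imp_le[OF t1(1)] t1(2)]
  moreover have "variation_sum A n (\<lambda>k. max (x k) t1) \<le> total_variation A t1 hi"
    by (rule variation_sum_le_total_variation[OF _ _ _ sp(2)]) (use t0 t1 in auto)
  moreover have "total_variation A t0 hi = total_variation A t0 t1 + total_variation A t1 hi"
    by (rule total_variation_additive) (use t0 t1 in auto)
  ultimately have "total_variation A t0 t1 \<le> e" using sp(3)[of A] ps px by linarith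
  then show ?thesis using t1 by auto
qed

lemma total_variation_small_left:
  assumes cont: "continuous_on {lo..hi} A" and t0: "lo < t0" "t0 \<le> hi" and e: "e > 0"
  shows "\<exists>t1. lo \<le> t1 \<and> t1 < t0 \<and> total_variation A t1 t0 \<le> e"
proof -
  obtain d where d: "d > 0"
    "\<And>x y. x \<in> {lo..hi} \<Longrightarrow> y \<in> {lo..hi} \<Longrightarrow> \<bar>x - y\<bar> < d \<Longrightarrow> \<bar>A x - A y\<bar> < e/2"
    using continuous_on_Icc_uniformly[OF cont, of "e/2"] e by auto
  obtain n x where p: "is_partition lo t0 n x" and px: "total_variation A lo t0 - e/2 < variation_sum A n x"
    using total_variation_approx[of lo t0 "e/2"] t0 e by auto
  define T where "T = {x k | k. k \<le> n \<and> x k < t0}"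
  have fT: "finite T" unfolding T_def by simp
  have "lo \<in> T" unfolding T_def using p t0 unfolding is_partition_def by auto
  then have "T \<noteq> {}" by blast
  define m where "m = Max T"
  have m: "m < t0" "lo \<le> m"
    using Max_in[OF fT \<open>T \<noteq> {}\<close>] Max_ge[OF fT \<open>lo \<in> T\<close>] unfolding m_def T_def by auto
  define t1 where "t1 = max (t0 - d/2) m"
  have t1: "t1 < t0" "lo \<le> t1" "t0 < t1 + d" using m d unfolding t1_def by auto
  have two_valued: "max (x k) t1 = t1 \<or> max (x k) t1 = t0" if "k \<le> n" for k
  proof (cases "x k < t0")
    case True
    then have "x k \<in> T" unfolding T_def using that by auto
    then have "x k \<le> m" unfolding m_def using fT by auto
    then show ?thesis unfolding t1_def by auto
  next
    case False then show ?thesis using partition_bounds[OF p that] t1 by auto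
  qed
  have ps: "variation_sum A n (\<lambda>k. max (x k) t1) = \<bar>A t0 - A t1\<bar>"
    by (rule variation_sum_two_valued) (use two_valued t1 p in \<open>auto simp: is_partition_def\<close>)
  have "\<bar>A t0 - A t1\<bar> < e/2" using d(2)[of t0 t1] t0 t1 by auto
  moreover note sp = partition_split[OF p t1(2) less_imp_le[OF t1(1)]]
  moreover have "variation_sum A n (\<lambda>k. min (x k) t1) \<le> total_variation A lo t1"
    by (rule variation_sum_le_total_variation[OF _ _ _ sp(1)]) (use t0 t1 in auto)
  moreover have "total_variation A lo t0 = total_variation A lo t1 + total_variation A t1 t0"
    by (rule total_variation_additive) (use t0 t1 in auto)
  ultimately have "total_variation A t1 t0 \<le> e" using sp(3)[of A] ps px by linarith
  then show ?thesis using t1 by auto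
qed

lemma total_variation_le_right:
  "lo \<le> a \<Longrightarrow> a \<le> b \<Longrightarrow> b \<le> c \<Longrightarrow> c \<le> hi \<Longrightarrow> total_variation A a b \<le> total_variation A a c"
  using total_variation_additive[of a b c] total_variation_nonneg[of b c] by simp

lemma total_variation_le_left:
  "lo \<le> a \<Longrightarrow> a \<le> b \<Longrightarrow> b \<le> c \<Longrightarrow> c \<le> hi \<Longrightarrow> total_variation A b c \<le> total_variation A a c"
  using total_variation_additive[of a b c] total_variation_nonneg[of a b] by simp

lemma total_variation_tendsto_right:
  assumes cont: "continuous_on {lo..hi} A" and t0: "t0 \<in> {lo..hi}" and e: "e > 0"
  obtains d where "d > 0" "\<And>t. t \<in> {lo..hi} \<Longrightarrow> t0 \<le> t \<Longrightarrow> t < t0 + d \<Longrightarrow> total_variation A t0 t < e"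
proof (cases "t0 < hi")
  case True
  then obtain t1 where t1: "t0 < t1" "t1 \<le> hi" "total_variation A t0 t1 \<le> e/2"
    using total_variation_small_right[OF cont, of t0 "e/2"] t0 e by auto
  show ?thesis
  proof (rule that[of "t1 - t0"])
    fix t assume "t \<in> {lo..hi}" "t0 \<le> t" "t < t0 + (t1 - t0)"
    then show "total_variation A t0 t < e"
      using total_variation_le_right[of t0 t t1] t0 t1 e by auto
  qed (use t1 in auto)
next
  case False
  then have "t0 = hi" using t0 by simp
  show ?thesis by (rule that[of 1]) (use \<open>t0 = hi\<close> total_variation_refl[of hi] t0 e in auto)
qed

lemma total_variation_tendsto_left:
  assumes cont: "continuous_on {lo..hi} A" and t0: "t0 \<in> {lo..hi}" and e: "e > 0"
  obtains d where "d > 0" "\<And>t. t \<in> {lo..hi} \<Longrightarrow> t \<le> t0 \<Longrightarrow> t0 - d < t \<Longrightarrow> total_variation A t t0 < e"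
proof (cases "lo < t0")
  case True
  then obtain t1 where t1: "lo \<le> t1" "t1 < t0" "total_variation A t1 t0 \<le> e/2"
    using total_variation_small_left[OF cont, of t0 "e/2"] t0 e by auto
  show ?thesis
  proof (rule that[of "t0 - t1"])
    fix t assume "t \<in> {lo..hi}" "t \<le> t0" "t0 - (t0 - t1) < t"
    then show "total_variation A t t0 < e"
      using total_variation_le_left[of t1 t t0] t0 t1 e by auto
  qed (use t1 in auto)
next
  case False
  then have "t0 = lo" using t0 by simp
  show ?thesis by (rule that[of 1]) (use \<open>t0 = lo\<close> total_variation_refl[of lo] t0 e in auto)
qed

lemma continuous_on_total_variation:
  assumes cont: "continuous_on {lo..hi} A"
  shows "continuous_on {lo..hi} (\<lambda>t. total_variation A lo t)"
  unfolding continuous_on_iff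
proof (intro ballI allI impI)
  fix t0 e :: real assume t0: "t0 \<in> {lo..hi}" and e: "0 < e"
  obtain d1 where d1: "d1 > 0" "\<And>t. t \<in> {lo..hi} \<Longrightarrow> t0 \<le> t \<Longrightarrow> t < t0 + d1 \<Longrightarrow> total_variation A t0 t < e"
    using total_variation_tendsto_right[OF cont t0 e] by blast
  obtain d2 where d2: "d2 > 0" "\<And>t. t \<in> {lo..hi} \<Longrightarrow> t \<le> t0 \<Longrightarrow> t0 - d2 < t \<Longrightarrow> total_variation A t t0 < e"
    using total_variation_tendsto_left[OF cont t0 e] by blast
  show "\<exists>d>0. \<forall>t\<in>{lo..hi}. dist t t0 < d \<longrightarrow> dist (total_variation A lo t) (total_variation A lo t0) < e"
  proof (intro exI[of _ "min d1 d2"] conjI ballI impI)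
    fix t assume t: "t \<in> {lo..hi}" "dist t t0 < min d1 d2"
    show "dist (total_variation A lo t) (total_variation A lo t0) < e"
    proof (cases "t0 \<le> t")
      case True
      then show ?thesis using total_variation_additive[of lo t0 t] total_variation_nonneg[of t0 t]
          d1(2)[of t] t t0 by (auto simp: dist_real_def)
    next
      case False
      then show ?thesis using total_variation_additive[of lo t t0] total_variation_nonneg[of t t0]
          d2(2)[of t] t t0 by (auto simp: dist_real_def)
    qed
  qed (use d1 d2 in simp)
qed

end

lemma bounded_variation_Jordan_decomposition:
  assumes cont: "continuous_on {a..b} A" and bv: "bounded_variation_on A a b"
  obtains P N where "mono_on {a..b} P" "mono_on {a..b} N"
    "continuous_on {a..b} P" "continuous_on {a..b} N" "\<And>s. A s = P s - N s"
proof -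
  interpret bounded_variation A a b by unfold_locales (rule bv)
  define V where "V t = total_variation A a t" for t
  have V_incr: "\<bar>A s - A r\<bar> \<le> V s - V r" if "r \<in> {a..b}" "s \<in> {a..b}" "r \<le> s" for r s
    using total_variation_additive[of a r s] abs_diff_le_total_variation[of r s] that
    unfolding V_def by auto
  have "continuous_on {a..b} V" unfolding V_def[abs_def] by (rule continuous_on_total_variation[OF cont])
  show ?thesis
  proof (rule that[of "\<lambda>s. (V s + A s) / 2" "\<lambda>s. (V s - A s) / 2"])
    show "mono_on {a..b} (\<lambda>s. (V s + A s) / 2)" "mono_on {a..b} (\<lambda>s. (V s - A s) / 2)"
      by (rule mono_onI, use V_incr in fastforce)+
    show "continuous_on {a..b} (\<lambda>s. (V s + A s) / 2)" "continuous_on {a..b} (\<lambda>s. (V s - A s) / 2)"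
      by (intro continuous_intros \<open>continuous_on {a..b} V\<close> cont; simp)+
  qed (simp add: field_simps)
qed

section \<open>Riemann--Stieltjes integrals\<close>

lemma fine_partition_exists:
  assumes ab: "a \<le> b" and d: "\<delta> > 0"
  shows "\<exists>n x. is_partition a b n x \<and> (\<forall>k<n. x (Suc k) - x k < \<delta>)"
proof -
  define n :: nat where "n = nat \<lceil>(b - a) / \<delta>\<rceil> + 1"
  have npos: "real n > 0" unfolding n_def by simp
  have "real n > (b - a) / \<delta>" unfolding n_def by linarith
  then have mesh: "(b - a) / real n < \<delta>" using d npos by (simp add: field_simps)
  define x where "x k = a + real k * (b - a) / real n" for k
  have "is_partition a b n x"
    unfolding is_partition_def x_def using npos ab
    by (auto simp: field_simps intro!: mult_right_mono)
  moreover have "x (Suc k) - x k = (b - a) / real n" for k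
  proof -
    have "x (Suc k) - x k = (real (Suc k) * (b - a) - real k * (b - a)) / real n"
      unfolding x_def by (simp add: diff_divide_distrib)
    then show ?thesis by (simp add: algebra_simps)
  qed
  ultimately show ?thesis using mesh by metis
qed

lemma has_RS_integral_unique:
  assumes ab: "a \<le> b" and I: "has_RS_integral f A a b I" and J: "has_RS_integral f A a b J"
  shows "I = J"
proof (rule ccontr)
  assume "I \<noteq> J"
  define e where "e = \<bar>I - J\<bar> / 2"
  have e: "e > 0" using \<open>I \<noteq> J\<close> unfolding e_def by simp
  obtain d1 where d1: "d1 > 0" "\<forall>n x \<xi>. is_partition a b n x \<and> (\<forall>k<n. x (Suc k) - x k < d1)
        \<and> (\<forall>k<n. x k \<le> \<xi> k \<and> \<xi> k \<le> x (Suc k))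
        \<longrightarrow> \<bar>(\<Sum>k<n. f (\<xi> k) * (A (x (Suc k)) - A (x k))) - I\<bar> < e"
    using I[unfolded has_RS_integral_def, rule_format, OF e] by blast
  obtain d2 where d2: "d2 > 0" "\<forall>n x \<xi>. is_partition a b n x \<and> (\<forall>k<n. x (Suc k) - x k < d2)
        \<and> (\<forall>k<n. x k \<le> \<xi> k \<and> \<xi> k \<le> x (Suc k))
        \<longrightarrow> \<bar>(\<Sum>k<n. f (\<xi> k) * (A (x (Suc k)) - A (x k))) - J\<bar> < e"
    using J[unfolded has_RS_integral_def, rule_format, OF e] by blast
  obtain n x where p: "is_partition a b n x" "\<forall>k<n. x (Suc k) - x k < min d1 d2"
    using fine_partition_exists[OF ab, of "min d1 d2"] d1 d2 by auto
  have tags: "\<forall>k<n. x k \<le> x k \<and> x k \<le> x (Suc k)" using p unfolding is_partition_def by auto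
  have "\<bar>(\<Sum>k<n. f (x k) * (A (x (Suc k)) - A (x k))) - I\<bar> < e"
    using d1(2)[rule_format, of n x x] p tags by auto
  moreover have "\<bar>(\<Sum>k<n. f (x k) * (A (x (Suc k)) - A (x k))) - J\<bar> < e"
    using d2(2)[rule_format, of n x x] p tags by auto
  ultimately have "\<bar>I - J\<bar> < 2 * e" by (simp add: abs_less_iff)
  then show False unfolding e_def by simp
qed

lemma RS_integral_eqI:
  assumes "a \<le> b" "has_RS_integral f A a b I"
  shows "RS_integral f A a b = I" "RS_integrable f A a b"
  using assms has_RS_integral_unique[OF assms(1) _ assms(2)]
  unfolding RS_integral_def RS_integrable_def by blast+

lemma has_RS_integral_add:
  assumes I: "has_RS_integral f A a b I" and J: "has_RS_integral f B a b J"
  shows "has_RS_integral f (\<lambda>s. A s + B s) a b (I + J)"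
  unfolding has_RS_integral_def
proof (intro allI impI)
  fix e :: real assume e: "e > 0"
  obtain d1 where d1: "d1 > 0" "\<forall>n x \<xi>. is_partition a b n x \<and> (\<forall>k<n. x (Suc k) - x k < d1)
        \<and> (\<forall>k<n. x k \<le> \<xi> k \<and> \<xi> k \<le> x (Suc k))
        \<longrightarrow> \<bar>(\<Sum>k<n. f (\<xi> k) * (A (x (Suc k)) - A (x k))) - I\<bar> < e/2"
    using I[unfolded has_RS_integral_def, rule_format, of "e/2"] e by auto
  obtain d2 where d2: "d2 > 0" "\<forall>n x \<xi>. is_partition a b n x \<and> (\<forall>k<n. x (Suc k) - x k < d2)
        \<and> (\<forall>k<n. x k \<le> \<xi> k \<and> \<xi> k \<le> x (Suc k))
        \<longrightarrow> \<bar>(\<Sum>k<n. f (\<xi> k) * (B (x (Suc k)) - B (x k))) - J\<bar> < e/2"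
    using J[unfolded has_RS_integral_def, rule_format, of "e/2"] e by auto
  show "\<exists>\<delta>>0. \<forall>n x \<xi>. is_partition a b n x \<and> (\<forall>k<n. x (Suc k) - x k < \<delta>) \<and>
             (\<forall>k<n. x k \<le> \<xi> k \<and> \<xi> k \<le> x (Suc k)) \<longrightarrow>
             \<bar>(\<Sum>k<n. f (\<xi> k) * (A (x (Suc k)) + B (x (Suc k)) - (A (x k) + B (x k)))) - (I + J)\<bar> < e"
  proof (intro exI[of _ "min d1 d2"] conjI allI impI)
    fix n x \<xi> assume H: "is_partition a b n x \<and> (\<forall>k<n. x (Suc k) - x k < min d1 d2) \<and>
             (\<forall>k<n. x k \<le> \<xi> k \<and> \<xi> k \<le> x (Suc k))"
    have "(\<Sum>k<n. f (\<xi> k) * (A (x (Suc k)) + B (x (Suc k)) - (A (x k) + B (x k))))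
        = (\<Sum>k<n. f (\<xi> k) * (A (x (Suc k)) - A (x k))) + (\<Sum>k<n. f (\<xi> k) * (B (x (Suc k)) - B (x k)))"
      by (simp add: sum.distrib[symmetric] algebra_simps)
    moreover have "\<bar>(\<Sum>k<n. f (\<xi> k) * (A (x (Suc k)) - A (x k))) - I\<bar> < e/2"
      using d1(2)[rule_format, of n x \<xi>] H by auto
    moreover have "\<bar>(\<Sum>k<n. f (\<xi> k) * (B (x (Suc k)) - B (x k))) - J\<bar> < e/2"
      using d2(2)[rule_format, of n x \<xi>] H by auto
    ultimately show "\<bar>(\<Sum>k<n. f (\<xi> k) * (A (x (Suc k)) + B (x (Suc k)) - (A (x k) + B (x k)))) - (I + J)\<bar> < e"
      by linarith
  qed (use d1 d2 in simp)
qed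

lemma has_RS_integral_uminus:
  assumes "has_RS_integral f A a b I"
  shows "has_RS_integral f (\<lambda>s. - A s) a b (- I)"
proof -
  have "(\<Sum>k<n. f (\<xi> k) * (- A (x (Suc k)) - - A (x k))) - - I
          = - ((\<Sum>k<n. f (\<xi> k) * (A (x (Suc k)) - A (x k))) - I)" for n x \<xi>
    using sum_negf[of "\<lambda>k. f (\<xi> k) * (A (x (Suc k)) - A (x k))" "{..<n}"] by (simp add: algebra_simps)
  then show ?thesis using assms unfolding has_RS_integral_def by (simp only: abs_minus_cancel)
qed

lemma has_RS_integral_diff:
  assumes "has_RS_integral f A a b I" "has_RS_integral f B a b J"
  shows "has_RS_integral f (\<lambda>s. A s - B s) a b (I - J)"
  using has_RS_integral_add[OF assms(1) has_RS_integral_uminus[OF assms(2)]] by simp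

lemma has_RS_integral_sum:
  assumes "finite J" "\<And>j. j \<in> J \<Longrightarrow> has_RS_integral f (A j) a b (I j)"
  shows "has_RS_integral f (\<lambda>s. \<Sum>j\<in>J. A j s) a b (\<Sum>j\<in>J. I j)"
  using assms
proof (induction J rule: finite_induct)
  case empty then show ?case unfolding has_RS_integral_def by (auto intro: exI[of _ 1])
next
  case (insert j J)
  then show ?case using has_RS_integral_add[of f "A j" a b "I j" "\<lambda>s. \<Sum>j\<in>J. A j s" "sum I J"] by auto
qed

section \<open>Stieltjes integrals with respect to monotone integrators\<close>

text \<open>The clamping to \<open>[0, 1]\<close> keeps the value in the domain also for \<open>u < M 0\<close>, where the
  set is empty and \<open>Sup\<close> is unspecified.\<close>
definition mono_inverse :: "(real \<Rightarrow> real) \<Rightarrow> real \<Rightarrow> real" where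
  "mono_inverse M u = max 0 (min 1 (Sup {r\<in>{0..1}. M r \<le> u}))"

text \<open>For monotone \<open>M\<close> the substitution \<open>u = M s\<close> turns \<open>\<integral>\<^sub>0\<^sup>t \<phi> dM\<close> into an ordinary integral over
  \<open>[M 0, M t]\<close>; taking this as the definition lets the Stieltjes integral inherit linearity,
  monotonicity and continuity from the Henstock--Kurzweil integral; it agrees with the
  Riemann--Stieltjes integral by \<open>has_RS_integral_stieltjes\<close>.\<close>
definition stieltjes :: "(real \<Rightarrow> real) \<Rightarrow> (real \<Rightarrow> real) \<Rightarrow> real \<Rightarrow> real" where
  "stieltjes M \<phi> t = integral {M 0..M t} (\<lambda>u. \<phi> (mono_inverse M u))"

lemma mono_inverse_in_unit: "mono_inverse M u \<in> {0..1}"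
  unfolding mono_inverse_def by auto

lemma mono_inverse_between:
  assumes M: "mono_on {0..1} M" and st: "0 \<le> s" "s \<le> t" "t \<le> 1" and u: "M s \<le> u" "u < M t"
  shows "s \<le> mono_inverse M u" "mono_inverse M u \<le> t"
proof -
  let ?S = "{r\<in>{0..1}. M r \<le> u}"
  have sS: "s \<in> ?S" using st u by auto
  have "s \<le> Sup ?S" using sS by (rule cSup_upper) (rule bdd_aboveI[of _ 1], auto)
  moreover have "Sup ?S \<le> t"
  proof (rule cSup_least)
    fix r assume r: "r \<in> ?S"
    show "r \<le> t"
    proof (rule ccontr)
      assume "\<not> r \<le> t"
      then have "M t \<le> M r" using r st by (intro mono_onD[OF M]) auto
      then show False using r u by auto
    qed
  qed (use sS in auto)
  ultimately show "s \<le> mono_inverse M u" "mono_inverse M u \<le> t"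
    unfolding mono_inverse_def using st by auto
qed

lemma mono_on_mono_inverse:
  assumes M: "mono_on {0..1} M"
  shows "mono_on {M 0..} (mono_inverse M)"
proof (rule mono_onI)
  fix u v assume uv: "u \<in> {M 0..}" "v \<in> {M 0..}" "u \<le> v"
  have "0 \<in> {r\<in>{0..1}. M r \<le> u}" using uv by auto
  then have ne: "{r\<in>{0..1}. M r \<le> u} \<noteq> {}" by blast
  have bdd: "bdd_above {r\<in>{0..1}. M r \<le> v}" by (rule bdd_aboveI[of _ 1]) auto
  have "{r\<in>{0..1}. M r \<le> u} \<subseteq> {r\<in>{0..1}. M r \<le> v}" using uv by auto
  then have "Sup {r\<in>{0..1}. M r \<le> u} \<le> Sup {r\<in>{0..1}. M r \<le> v}"
    by (rule cSup_subset_mono[OF ne bdd])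
  then show "mono_inverse M u \<le> mono_inverse M v" unfolding mono_inverse_def by auto
qed

lemma mono_inverse_right_inverse:
  assumes M: "mono_on {0..1} M" and Mc: "continuous_on {0..1} M" and u: "M 0 \<le> u" "u \<le> M 1"
  shows "M (mono_inverse M u) = u"
proof -
  let ?S = "{r\<in>{0..1}. M r \<le> u}"
  have "0 \<in> ?S" using u by auto
  then have ne: "?S \<noteq> {}" by blast
  have bdd: "bdd_above ?S" by (rule bdd_aboveI[of _ 1]) auto
  have "?S = {0..1} \<inter> M -` {..u}" by auto
  then have "closed ?S" using continuous_closed_preimage[OF Mc] by auto
  define \<sigma> where "\<sigma> = Sup ?S"
  have \<sigma>: "\<sigma> \<in> ?S" unfolding \<sigma>_def using closed_contains_Sup[OF ne bdd \<open>closed ?S\<close>] .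
  then have inv: "mono_inverse M u = \<sigma>" unfolding mono_inverse_def \<sigma>_def by auto
  have "u \<le> M \<sigma>"
  proof (rule ccontr)
    assume "\<not> u \<le> M \<sigma>"
    then have lt: "M \<sigma> < u" by simp
    then have "\<sigma> < 1" using \<sigma> u by (cases "\<sigma> = 1") auto
    obtain d where d: "d > 0" "\<forall>r\<in>{0..1}. dist r \<sigma> < d \<longrightarrow> dist (M r) (M \<sigma>) < u - M \<sigma>"
      using Mc \<sigma> lt unfolding continuous_on_iff by (metis diff_gt_0_iff_gt mem_Collect_eq)
    define r where "r = min 1 (\<sigma> + d/2)"
    have r: "r \<in> {0..1}" "\<sigma> < r" "dist r \<sigma> < d"
      using \<open>\<sigma> < 1\<close> \<sigma> d unfolding r_def by (auto simp: dist_real_def)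
    then have "M r < u" using d(2)[rule_format, of r] by (auto simp: dist_real_def)
    then have "r \<in> ?S" using r by auto
    then have "r \<le> \<sigma>" unfolding \<sigma>_def using bdd by (rule cSup_upper)
    then show False using r by simp
  qed
  then show ?thesis using inv \<sigma> by simp
qed

lemma integrable_on_comp_mono_inverse:
  fixes \<phi> :: "real \<Rightarrow> real"
  assumes M: "mono_on {0..1} M" and \<phi>: "continuous_on {0..1} \<phi>" and a: "M 0 \<le> a"
  shows "(\<lambda>u. \<phi> (mono_inverse M u)) integrable_on {a..b}"
proof -
  define h where "h x = \<phi> (max 0 (min 1 x))" for x
  have "continuous_on UNIV h" unfolding h_def
    by (rule continuous_on_compose2[OF \<phi>]) (auto intro!: continuous_intros)
  then have h: "h \<in> borel_measurable borel" by (rule borel_measurable_continuous_onI)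
  have "mono_on {a..b} (mono_inverse M)"
    using mono_on_subset[OF mono_on_mono_inverse[OF M]] a by auto
  then have inv_borel: "mono_inverse M \<in> borel_measurable (restrict_space borel {a..b})"
    by (rule borel_measurable_mono_on_fnc)
  have "sets (restrict_space borel {a..b}) \<subseteq> sets (restrict_space lebesgue {a..b})"
    by (rule mono_restrict_space) auto
  then have "mono_inverse M \<in> borel_measurable (lebesgue_on {a..b})"
    using borel_measurable_subalgebra[OF _ _ inv_borel] by auto
  then have m: "(\<lambda>u. h (mono_inverse M u)) \<in> borel_measurable (lebesgue_on {a..b})"
    by (rule measurable_compose[OF _ h])
  obtain K where K: "\<And>s. s \<in> {0..1} \<Longrightarrow> \<bar>\<phi> s\<bar> \<le> K" using continuous_on_Icc_bounded[OF \<phi>] by blast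
  have eq: "h (mono_inverse M u) = \<phi> (mono_inverse M u)" for u
    unfolding h_def using mono_inverse_in_unit[of M u] by auto
  have "(\<lambda>u. h (mono_inverse M u)) integrable_on {a..b}"
    by (rule measurable_bounded_by_integrable_imp_integrable_real[OF m integrable_const_ivl[of K]])
       (use K mono_inverse_in_unit eq in auto)
  then show ?thesis using eq by simp
qed

lemma abs_integral_diff_const_le:
  fixes h :: "real \<Rightarrow> real"
  assumes h: "h integrable_on {a..b}" and ab: "a \<le> b" and e: "e \<ge> 0"
    and close: "\<And>u. a \<le> u \<Longrightarrow> u < b \<Longrightarrow> \<bar>h u - c\<bar> \<le> e"
  shows "\<bar>integral {a..b} h - c * (b - a)\<bar> \<le> e * (b - a)"
proof -
  have "((\<lambda>u. h u - c) has_integral (integral {a..b} h - Henstock_Kurzweil_Integration.content {a..b} *\<^sub>R c)) {a..b}"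
    by (intro has_integral_diff integrable_integral h has_integral_const_real)
  then have "norm (integral {a..b} h - Henstock_Kurzweil_Integration.content {a..b} *\<^sub>R c) \<le> e * Henstock_Kurzweil_Integration.content {a..b}"
    by (rule has_integral_bound_real[OF e finite.insertI[OF finite.emptyI, of b]]) (use close in auto)
  then show ?thesis using ab by (simp add: content_real algebra_simps)
qed

lemma stieltjes_increment_approx:
  assumes M: "mono_on {0..1} M" and \<phi>: "continuous_on {0..1} \<phi>" and st: "0 \<le> s" "s \<le> t" "t \<le> 1"
    and e: "e \<ge> 0" and close: "\<And>r. r \<in> {s..t} \<Longrightarrow> \<bar>\<phi> r - c\<bar> \<le> e"
  shows "\<bar>stieltjes M \<phi> t - stieltjes M \<phi> s - c * (M t - M s)\<bar> \<le> e * (M t - M s)"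
proof -
  have m: "M 0 \<le> M s" "M s \<le> M t" using mono_onD[OF M] st by auto
  have "stieltjes M \<phi> t = stieltjes M \<phi> s + integral {M s..M t} (\<lambda>u. \<phi> (mono_inverse M u))"
    unfolding stieltjes_def
    using Henstock_Kurzweil_Integration.integral_combine[OF m integrable_on_comp_mono_inverse[OF M \<phi> order_refl]] by simp
  moreover have "\<bar>integral {M s..M t} (\<lambda>u. \<phi> (mono_inverse M u)) - c * (M t - M s)\<bar> \<le> e * (M t - M s)"
  proof (rule abs_integral_diff_const_le[OF integrable_on_comp_mono_inverse[OF M \<phi> m(1)] m(2) e])
    fix u assume "M s \<le> u" "u < M t"
    then show "\<bar>\<phi> (mono_inverse M u) - c\<bar> \<le> e"
      using close mono_inverse_between[OF M st] by auto
  qed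
  ultimately show ?thesis by simp
qed

lemma stieltjes_at_0: "stieltjes M \<phi> 0 = 0"
  unfolding stieltjes_def by simp

lemma has_RS_integral_stieltjes:
  assumes M: "mono_on {0..1} M" and \<phi>: "continuous_on {0..1} \<phi>" and t: "0 \<le> t" "t \<le> 1"
  shows "has_RS_integral \<phi> M 0 t (stieltjes M \<phi> t)"
  unfolding has_RS_integral_def
proof (intro allI impI)
  fix \<epsilon> :: real assume \<epsilon>: "\<epsilon> > 0"
  have M01: "M 0 \<le> M 1" using mono_onD[OF M] by auto
  define e where "e = \<epsilon> / (M 1 - M 0 + 1)"
  have e: "e > 0" "e * (M 1 - M 0) < \<epsilon>"
    unfolding e_def using \<epsilon> M01 by (auto simp: field_simps)
  obtain d where d: "d > 0" "\<And>x y. x \<in> {0..1} \<Longrightarrow> y \<in> {0..1} \<Longrightarrow> \<bar>x - y\<bar> < d \<Longrightarrow> \<bar>\<phi> x - \<phi> y\<bar> < e"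
    using continuous_on_Icc_uniformly[OF \<phi> e(1)] by blast
  show "\<exists>\<delta>>0. \<forall>n x \<xi>. is_partition 0 t n x \<and> (\<forall>k<n. x (Suc k) - x k < \<delta>) \<and>
          (\<forall>k<n. x k \<le> \<xi> k \<and> \<xi> k \<le> x (Suc k)) \<longrightarrow>
          \<bar>(\<Sum>k<n. \<phi> (\<xi> k) * (M (x (Suc k)) - M (x k))) - stieltjes M \<phi> t\<bar> < \<epsilon>"
  proof (intro exI[of _ d] conjI allI impI)
    fix n x \<xi> assume H: "is_partition 0 t n x \<and> (\<forall>k<n. x (Suc k) - x k < d) \<and>
          (\<forall>k<n. x k \<le> \<xi> k \<and> \<xi> k \<le> x (Suc k))"
    then have p: "is_partition 0 t n x" by blast
    have x: "0 \<le> x k" "x k \<le> x (Suc k)" "x (Suc k) \<le> 1" if "k < n" for k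
      using partition_bounds[OF p, of k] partition_bounds[OF p, of "Suc k"] p t that
      unfolding is_partition_def by auto
    define S where "S k = stieltjes M \<phi> (x k)" for k
    have piece: "\<bar>\<phi> (\<xi> k) * (M (x (Suc k)) - M (x k)) - (S (Suc k) - S k)\<bar>
             \<le> e * (M (x (Suc k)) - M (x k))" if k: "k < n" for k
    proof -
      have "\<bar>\<phi> r - \<phi> (\<xi> k)\<bar> \<le> e" if "r \<in> {x k..x (Suc k)}" for r
        using d(2)[of r "\<xi> k"] H x[OF k] that k by fastforce
      then show ?thesis unfolding S_def
        using stieltjes_increment_approx[OF M \<phi> x[OF k], of e "\<phi> (\<xi> k)"] e(1) by (simp add: abs_minus_commute)
    qed
    have "stieltjes M \<phi> t = (\<Sum>k<n. S (Suc k) - S k)"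
      using p sum_lessThan_telescope[of S n] unfolding S_def is_partition_def by (simp add: stieltjes_at_0)
    then have "\<bar>(\<Sum>k<n. \<phi> (\<xi> k) * (M (x (Suc k)) - M (x k))) - stieltjes M \<phi> t\<bar>
        \<le> (\<Sum>k<n. \<bar>\<phi> (\<xi> k) * (M (x (Suc k)) - M (x k)) - (S (Suc k) - S k)\<bar>)"
      by (simp add: sum_subtractf[symmetric] sum_abs)
    also have "\<dots> \<le> (\<Sum>k<n. e * (M (x (Suc k)) - M (x k)))"
      by (rule sum_mono) (use piece in auto)
    also have "\<dots> = e * (M t - M 0)"
      using p sum_lessThan_telescope[of "\<lambda>k. M (x k)" n]
      by (simp add: sum_distrib_left[symmetric] is_partition_def)
    also have "\<dots> \<le> e * (M 1 - M 0)"
      using mono_onD[OF M, of t 1] t e by auto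
    finally show "\<bar>(\<Sum>k<n. \<phi> (\<xi> k) * (M (x (Suc k)) - M (x k))) - stieltjes M \<phi> t\<bar> < \<epsilon>"
      using e(2) by linarith
  qed (use d in simp)
qed

lemma stieltjes_add:
  assumes M: "mono_on {0..1} M" and \<phi>: "continuous_on {0..1} \<phi>" and \<psi>: "continuous_on {0..1} \<psi>"
  shows "stieltjes M (\<lambda>s. \<phi> s + \<psi> s) t = stieltjes M \<phi> t + stieltjes M \<psi> t"
  unfolding stieltjes_def
  by (rule integral_add) (use integrable_on_comp_mono_inverse[OF M] \<phi> \<psi> in auto)

lemma stieltjes_diff:
  assumes M: "mono_on {0..1} M" and \<phi>: "continuous_on {0..1} \<phi>" and \<psi>: "continuous_on {0..1} \<psi>"
  shows "stieltjes M (\<lambda>s. \<phi> s - \<psi> s) t = stieltjes M \<phi> t - stieltjes M \<psi> t"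
  unfolding stieltjes_def
  by (rule integral_diff) (use integrable_on_comp_mono_inverse[OF M] \<phi> \<psi> in auto)

lemma stieltjes_cmult: "stieltjes M (\<lambda>s. c * \<phi> s) t = c * stieltjes M \<phi> t"
  unfolding stieltjes_def by (rule integral_mult_right)

lemma stieltjes_uminus: "stieltjes M (\<lambda>s. - \<phi> s) t = - stieltjes M \<phi> t"
  using stieltjes_cmult[of M "-1" \<phi> t] by simp

lemma stieltjes_const:
  assumes M: "mono_on {0..1} M" and t: "0 \<le> t" "t \<le> 1"
  shows "stieltjes M (\<lambda>s. c) t = c * (M t - M 0)"
  using mono_onD[OF M, of 0 t] t unfolding stieltjes_def by simp

lemma stieltjes_mono:
  assumes M: "mono_on {0..1} M" and \<phi>: "continuous_on {0..1} \<phi>" and \<psi>: "continuous_on {0..1} \<psi>"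
    and le: "\<And>s. s \<in> {0..1} \<Longrightarrow> \<phi> s \<le> \<psi> s"
  shows "stieltjes M \<phi> t \<le> stieltjes M \<psi> t"
  unfolding stieltjes_def
  by (rule integral_le) (use integrable_on_comp_mono_inverse[OF M] \<phi> \<psi> le mono_inverse_in_unit in auto)

lemma abs_stieltjes_le:
  assumes M: "mono_on {0..1} M" and \<phi>: "continuous_on {0..1} \<phi>"
  shows "\<bar>stieltjes M \<phi> t\<bar> \<le> stieltjes M (\<lambda>s. \<bar>\<phi> s\<bar>) t"
proof -
  have "stieltjes M \<phi> t \<le> stieltjes M (\<lambda>s. \<bar>\<phi> s\<bar>) t"
    by (rule stieltjes_mono[OF M \<phi>]) (auto intro: continuous_intros \<phi>)
  moreover have "stieltjes M (\<lambda>s. - \<phi> s) t \<le> stieltjes M (\<lambda>s. \<bar>\<phi> s\<bar>) t"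
    by (rule stieltjes_mono[OF M]) (auto intro: continuous_intros \<phi>)
  ultimately show ?thesis using stieltjes_uminus[of M \<phi> t] by linarith
qed

lemma abs_stieltjes_le_bound:
  assumes M: "mono_on {0..1} M" and \<phi>: "continuous_on {0..1} \<phi>" and \<psi>: "continuous_on {0..1} \<psi>"
    and le: "\<And>s. s \<in> {0..1} \<Longrightarrow> \<bar>\<phi> s\<bar> \<le> \<psi> s"
  shows "\<bar>stieltjes M \<phi> t\<bar> \<le> stieltjes M \<psi> t"
proof -
  have "continuous_on {0..1} (\<lambda>s. \<bar>\<phi> s\<bar>)" by (intro continuous_intros \<phi>)
  then show ?thesis using abs_stieltjes_le[OF M \<phi>, of t] stieltjes_mono[OF M _ \<psi> le, of t] by linarith
qed

lemma stieltjes_lipschitz: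
  assumes M: "mono_on {0..1} M" and \<phi>: "continuous_on {0..1} \<phi>"
    and K: "\<And>s. s \<in> {0..1} \<Longrightarrow> \<bar>\<phi> s\<bar> \<le> K" and st: "s \<in> {0..1}" "t \<in> {0..1}"
  shows "\<bar>stieltjes M \<phi> t - stieltjes M \<phi> s\<bar> \<le> K * \<bar>M t - M s\<bar>"
proof -
  have K0: "K \<ge> 0" using K[of 0] by auto
  have "\<bar>stieltjes M \<phi> b - stieltjes M \<phi> a\<bar> \<le> K * (M b - M a)" if "a \<in> {0..1}" "b \<in> {0..1}" "a \<le> b" for a b
    using stieltjes_increment_approx[OF M \<phi>, of a b K 0] K K0 that by auto
  moreover have "M s \<le> M t" if "s \<le> t" using mono_onD[OF M] st that by auto
  moreover have "M t \<le> M s" if "t \<le> s" using mono_onD[OF M] st that by auto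
  ultimately show ?thesis using st by (cases "s \<le> t") (force simp: abs_minus_commute)+
qed

lemma stieltjes_cong:
  assumes M: "mono_on {0..1} M" and t: "0 \<le> t" "t \<le> 1" and eq: "\<And>s. s \<in> {0..t} \<Longrightarrow> \<phi> s = \<psi> s"
  shows "stieltjes M \<phi> t = stieltjes M \<psi> t"
  unfolding stieltjes_def
proof (rule integral_spike[of "{M t}"])
  fix u assume "u \<in> {M 0..M t} - {M t}"
  then have "0 \<le> mono_inverse M u" "mono_inverse M u \<le> t"
    using mono_inverse_between[OF M _ t(1) t(2), of u] by auto
  then show "\<psi> (mono_inverse M u) = \<phi> (mono_inverse M u)" using eq by auto
qed simp

lemma continuous_on_stieltjes:
  assumes M: "mono_on {0..1} M" and Mc: "continuous_on {0..1} M" and \<phi>: "continuous_on {0..1} \<phi>"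
  shows "continuous_on {0..1} (stieltjes M \<phi>)"
proof -
  have "continuous_on {M 0..M 1} (\<lambda>v. integral {M 0..v} (\<lambda>u. \<phi> (mono_inverse M u)))"
    by (rule indefinite_integral_continuous_1[OF integrable_on_comp_mono_inverse[OF M \<phi> order_refl]])
  then have "continuous_on {0..1} (\<lambda>t. integral {M 0..M t} (\<lambda>u. \<phi> (mono_inverse M u)))"
    by (rule continuous_on_compose2[OF _ Mc]) (use mono_onD[OF M] in auto)
  then show ?thesis unfolding stieltjes_def[abs_def] .
qed

lemma stieltjes_exp:
  assumes M: "mono_on {0..1} M" and Mc: "continuous_on {0..1} M" and l: "l > 0" and t: "0 \<le> t" "t \<le> 1"
  shows "stieltjes M (\<lambda>s. exp (l * M s)) t = (exp (l * M t) - exp (l * M 0)) / l"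
proof -
  have m: "M 0 \<le> M t" "M t \<le> M 1" using mono_onD[OF M] t by auto
  have "stieltjes M (\<lambda>s. exp (l * M s)) t = integral {M 0..M t} (\<lambda>u. exp (l * u))"
    unfolding stieltjes_def by (rule integral_cong) (use mono_inverse_right_inverse[OF M Mc] m in auto)
  also have "\<dots> = exp (l * M t) / l - exp (l * M 0) / l"
  proof (rule integral_unique, rule fundamental_theorem_of_calculus[OF m(1)])
    fix x assume "x \<in> {M 0..M t}"
    have "((\<lambda>u. exp (l * u) / l) has_real_derivative exp (l * x)) (at x within {M 0..M t})"
      using l by (auto intro!: derivative_eq_intros)
    then show "((\<lambda>u. exp (l * u) / l) has_vector_derivative exp (l * x)) (at x within {M 0..M t})"
      by (simp add: has_real_derivative_iff_has_vector_derivative)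
  qed
  finally show ?thesis by (simp add: diff_divide_distrib)
qed

lemma sum_stieltjes_integrators:
  assumes J: "finite J" and M: "\<And>j. j \<in> J \<Longrightarrow> mono_on {0..1} (M j)" and \<phi>: "continuous_on {0..1} \<phi>"
    and t: "0 \<le> t" "t \<le> 1"
  shows "(\<Sum>j\<in>J. stieltjes (M j) \<phi> t) = stieltjes (\<lambda>s. \<Sum>j\<in>J. M j s) \<phi> t"
proof -
  have "mono_on {0..1} (\<lambda>s. \<Sum>j\<in>J. M j s)"
    by (intro mono_onI sum_mono) (use M mono_onD in blast)
  moreover have "has_RS_integral \<phi> (\<lambda>s. \<Sum>j\<in>J. M j s) 0 t (\<Sum>j\<in>J. stieltjes (M j) \<phi> t)"
    by (rule has_RS_integral_sum[OF J]) (use has_RS_integral_stieltjes[OF M \<phi> t] in auto)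
  ultimately show ?thesis
    using has_RS_integral_unique[OF t(1) _ has_RS_integral_stieltjes[OF _ \<phi> t]] by blast
qed

lemma stieltjes_tendsto_uniform:
  assumes M: "mono_on {0..1} M" and \<phi>: "\<And>n. continuous_on {0..1} (\<phi> n)" and \<psi>: "continuous_on {0..1} \<psi>"
    and uniform: "\<And>e. e > 0 \<Longrightarrow> eventually (\<lambda>n. \<forall>s\<in>{0..1}. \<bar>\<phi> n s - \<psi> s\<bar> \<le> e) sequentially"
    and t: "0 \<le> t" "t \<le> 1"
  shows "(\<lambda>n. stieltjes M (\<phi> n) t) \<longlonglongrightarrow> stieltjes M \<psi> t"
proof (rule tendstoI)
  fix \<epsilon> :: real assume \<epsilon>: "\<epsilon> > 0"
  have M0t: "0 \<le> M t - M 0" using mono_onD[OF M, of 0 t] t by simp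
  define e where "e = \<epsilon> / (M t - M 0 + 1)"
  have e: "e > 0" "e * (M t - M 0) < \<epsilon>" unfolding e_def using \<epsilon> M0t by (auto simp: field_simps)
  show "eventually (\<lambda>n. dist (stieltjes M (\<phi> n) t) (stieltjes M \<psi> t) < \<epsilon>) sequentially"
    using uniform[OF e(1)]
  proof eventually_elim
    case (elim n)
    have "\<bar>stieltjes M (\<lambda>s. \<phi> n s - \<psi> s) t\<bar> \<le> stieltjes M (\<lambda>s. e) t"
      by (rule abs_stieltjes_le_bound[OF M]) (use elim \<phi> \<psi> in \<open>auto intro!: continuous_intros\<close>)
    then show ?case using stieltjes_diff[OF M \<phi> \<psi>] stieltjes_const[OF M t] e(2)
      by (simp add: dist_real_def)
  qed
qed

text \<open>Gronwall's inequality in Bielecki's weighted form: with \<open>\<mu> = max (D \<cdot> exp (-l W))\<close> the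
  hypothesis gives \<open>\<mu> exp (l W) \<le> a + \<mu> exp (l W) / 2\<close> at the maximiser, so \<open>\<mu> \<le> 2 a exp (-l W)\<close>
  there.  Quantifying over all admissible \<open>\<mu>\<close> lets the hypothesis tolerate delayed arguments.\<close>
lemma gronwall_stieltjes:
  fixes D W :: "real \<Rightarrow> real" and a L :: real
  assumes W: "mono_on {0..1} W" and Wc: "continuous_on {0..1} W" and Dc: "continuous_on {0..1} D"
    and D0: "\<And>s. s \<in> {0..1} \<Longrightarrow> 0 \<le> D s" and a: "a \<ge> 0" and L: "L \<ge> 0"
    and H: "\<And>\<mu>. \<mu> \<ge> 0 \<Longrightarrow> (\<forall>s\<in>{0..1}. D s \<le> \<mu> * exp ((2*L+1) * W s)) \<Longrightarrow>
             (\<forall>t\<in>{0..1}. D t \<le> a + L * \<mu> * stieltjes W (\<lambda>s. exp ((2*L+1) * W s)) t)"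
    and t: "t \<in> {0..1}"
  shows "D t \<le> 2 * a * exp ((2*L+1) * (W t - W 0))"
proof -
  define l where "l = 2*L+1"
  have l: "l > 0" using L unfolding l_def by simp
  define F where "F s = D s * exp (- l * W s)" for s
  have "continuous_on {0..1} F" unfolding F_def by (intro continuous_intros Dc Wc)
  then obtain s0 where s0: "s0 \<in> {0..1}" "\<And>y. y \<in> {0..1} \<Longrightarrow> F y \<le> F s0"
    using continuous_attains_sup[OF compact_Icc _ \<open>continuous_on {0..1} F\<close>] by auto
  define \<mu> where "\<mu> = F s0"
  have mu0: "\<mu> \<ge> 0" unfolding \<mu>_def F_def using D0[OF s0(1)] by simp
  have DF: "D s = F s * exp (l * W s)" for s unfolding F_def by (simp add: exp_minus field_simps)
  have Db: "\<forall>s\<in>{0..1}. D s \<le> \<mu> * exp (l * W s)"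
  proof
    fix s :: real assume s: "s \<in> {0..1}"
    show "D s \<le> \<mu> * exp (l * W s)" unfolding DF[of s] \<mu>_def
      by (rule mult_right_mono[OF s0(2)[OF s]]) simp
  qed
  have H1: "D s0 \<le> a + L * \<mu> * stieltjes W (\<lambda>s. exp (l * W s)) s0"
    using H[OF mu0] Db s0(1) unfolding l_def by blast
  define E where "E = exp (l * W s0)"
  have E: "E > 0" unfolding E_def by simp
  have "stieltjes W (\<lambda>s. exp (l * W s)) s0 = (E - exp (l * W 0)) / l"
    unfolding E_def using stieltjes_exp[OF W Wc l] s0(1) by auto
  also have "\<dots> \<le> E / l" using l by (simp add: divide_right_mono)
  finally have "L * \<mu> * stieltjes W (\<lambda>s. exp (l * W s)) s0 \<le> L * \<mu> * (E / l)"
    using L mu0 by (intro mult_left_mono) auto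
  also have "L * \<mu> * (E / l) = (L / l) * (\<mu> * E)" by simp
  also have "\<dots> \<le> (1/2) * (\<mu> * E)"
    by (rule mult_right_mono) (use l L mu0 E in \<open>auto simp: l_def field_simps\<close>)
  finally have "D s0 \<le> a + (1/2) * (\<mu> * E)" using H1 by simp
  moreover have "D s0 = \<mu> * E" unfolding \<mu>_def E_def using DF by simp
  ultimately have muE: "\<mu> * E \<le> 2 * a" by simp
  have "D t \<le> \<mu> * exp (l * W t)" using Db t by blast
  also have "\<mu> * exp (l * W t) = (\<mu> * E) * exp (l * (W t - W s0))"
    unfolding E_def by (simp add: right_diff_distrib exp_diff)
  also have "\<dots> \<le> (2 * a) * exp (l * (W t - W s0))"
    by (rule mult_right_mono[OF muE]) simp
  also have "\<dots> \<le> (2 * a) * exp (l * (W t - W 0))"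
    using mono_onD[OF W, of 0 s0] s0(1) l a by (intro mult_left_mono) (auto intro!: mult_left_mono)
  finally show ?thesis unfolding l_def .
qed

section \<open>Integral equations driven by monotone integrators\<close>

lemma continuous_on_comp_curve:
  assumes g: "continuous_on ({0..1} \<times> UNIV) (\<lambda>(t, \<xi>). g t \<xi>)" and X: "continuous_on {0..1} X"
  shows "continuous_on {0..1} (\<lambda>s. g s (X s))"
proof -
  have "continuous_on {0..1} (\<lambda>s. (\<lambda>(t, \<xi>). g t \<xi>) (s, X s))"
    by (rule continuous_on_compose2[OF g]) (auto intro!: continuous_intros X)
  then show ?thesis by simp
qed

locale stieltjes_system =
  fixes J :: "'j set" and M :: "'j \<Rightarrow> real \<Rightarrow> real" and h :: "'j \<Rightarrow> real \<Rightarrow> real \<Rightarrow> real"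
    and f :: "real \<Rightarrow> real" and c :: real
  assumes finite_J: "finite J"
    and mono_M: "\<And>j. j \<in> J \<Longrightarrow> mono_on {0..1} (M j)"
    and continuous_M: "\<And>j. j \<in> J \<Longrightarrow> continuous_on {0..1} (M j)"
    and continuous_h: "\<And>j. j \<in> J \<Longrightarrow> continuous_on ({0..1} \<times> UNIV) (\<lambda>(t, \<xi>). h j t \<xi>)"
    and growth_h: "\<And>j t \<xi>. j \<in> J \<Longrightarrow> t \<in> {0..1} \<Longrightarrow> \<bar>h j t \<xi>\<bar> \<le> c * (1 + \<bar>\<xi>\<bar>)"
    and c_nonneg: "c \<ge> 0"
    and continuous_f: "continuous_on {0..1} f"
begin

definition solves :: "(real \<Rightarrow> real) \<Rightarrow> bool" where
  "solves B \<longleftrightarrow> continuous_on {0..1} B \<and>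
     (\<forall>t\<in>{0..1}. B t = f t + (\<Sum>j\<in>J. stieltjes (M j) (\<lambda>s. h j s (B s)) t))"

definition W :: "real \<Rightarrow> real" where
  "W s = (\<Sum>j\<in>J. M j s)"

lemma mono_W: "mono_on {0..1} W"
  unfolding W_def by (intro mono_onI sum_mono) (use mono_M mono_onD in blast)

lemma continuous_W: "continuous_on {0..1} W"
  unfolding W_def[abs_def] by (intro continuous_on_sum continuous_M)

lemma abs_sum_stieltjes_le:
  assumes \<phi>: "\<And>j. j \<in> J \<Longrightarrow> continuous_on {0..1} (\<phi> j)" and \<psi>: "continuous_on {0..1} \<psi>"
    and le: "\<And>j s. j \<in> J \<Longrightarrow> s \<in> {0..1} \<Longrightarrow> \<bar>\<phi> j s\<bar> \<le> \<psi> s" and t: "t \<in> {0..1}"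
  shows "\<bar>\<Sum>j\<in>J. stieltjes (M j) (\<phi> j) t\<bar> \<le> stieltjes W \<psi> t"
proof -
  have "\<bar>\<Sum>j\<in>J. stieltjes (M j) (\<phi> j) t\<bar> \<le> (\<Sum>j\<in>J. \<bar>stieltjes (M j) (\<phi> j) t\<bar>)"
    by (rule sum_abs)
  also have "\<dots> \<le> (\<Sum>j\<in>J. stieltjes (M j) \<psi> t)"
  proof (rule sum_mono)
    fix j assume j: "j \<in> J"
    show "\<bar>stieltjes (M j) (\<phi> j) t\<bar> \<le> stieltjes (M j) \<psi> t"
      by (rule abs_stieltjes_le_bound[OF mono_M[OF j] \<phi>[OF j] \<psi> le[OF j]])
  qed
  also have "\<dots> = stieltjes W \<psi> t"
    unfolding W_def[abs_def] using sum_stieltjes_integrators[OF finite_J mono_M \<psi>] t by auto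
  finally show ?thesis .
qed

text \<open>Tonelli's approximation: the delayed integrand only looks \<open>\<delta>\<close> into the past, so each
  application of \<open>delayed \<delta>\<close> fixes the solution on a further interval of length \<open>\<delta>\<close>.\<close>
definition delayed :: "real \<Rightarrow> (real \<Rightarrow> real) \<Rightarrow> real \<Rightarrow> real" where
  "delayed \<delta> X t = f t + (\<Sum>j\<in>J. stieltjes (M j) (\<lambda>s. h j s (X (max 0 (s - \<delta>)))) t)"

lemma continuous_on_delayed_integrand:
  assumes "\<delta> \<ge> 0" "continuous_on {0..1} X" "j \<in> J"
  shows "continuous_on {0..1} (\<lambda>s. h j s (X (max 0 (s - \<delta>))))"
proof -
  have "continuous_on {0..1} (\<lambda>s. X (max 0 (s - \<delta>)))"
    by (rule continuous_on_compose2[OF assms(2)]) (use assms(1) in \<open>auto intro!: continuous_intros\<close>)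
  then show ?thesis by (rule continuous_on_comp_curve[OF continuous_h[OF assms(3)]])
qed

lemma continuous_on_delayed:
  assumes "\<delta> \<ge> 0" "continuous_on {0..1} X"
  shows "continuous_on {0..1} (delayed \<delta> X)"
  unfolding delayed_def[abs_def]
  by (intro continuous_intros continuous_f continuous_on_stieltjes mono_M continuous_M
        continuous_on_delayed_integrand assms)

lemma delayed_at_0: "delayed \<delta> X 0 = f 0"
  unfolding delayed_def by (simp add: stieltjes_at_0)

lemma delayed_eq_if_eq_before:
  assumes \<delta>: "\<delta> > 0" and eq: "\<And>r. r \<in> {0..1} \<Longrightarrow> r < real k * \<delta> \<or> r = 0 \<Longrightarrow> X r = Y r"
    and t: "t \<in> {0..1}" "t < real (Suc k) * \<delta> \<or> t = 0"
  shows "delayed \<delta> X t = delayed \<delta> Y t"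
proof -
  have "stieltjes (M j) (\<lambda>s. h j s (X (max 0 (s - \<delta>)))) t = stieltjes (M j) (\<lambda>s. h j s (Y (max 0 (s - \<delta>)))) t"
    if j: "j \<in> J" for j
  proof (rule stieltjes_cong[OF mono_M[OF j]])
    fix s assume s: "s \<in> {0..t}"
    have "max 0 (s - \<delta>) < real k * \<delta> \<or> max 0 (s - \<delta>) = 0"
    proof (cases "s - \<delta> \<le> 0")
      case False
      then have "t < real (Suc k) * \<delta>" using s t \<delta> by auto
      then show ?thesis using s False by (auto simp: algebra_simps)
    qed simp
    then show "h j s (X (max 0 (s - \<delta>))) = h j s (Y (max 0 (s - \<delta>)))"
      using eq[of "max 0 (s - \<delta>)"] s t \<delta> by auto
  qed (use t in auto)
  then show ?thesis unfolding delayed_def by simp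
qed

lemma delayed_iterate_eq_before:
  assumes \<delta>: "\<delta> > 0" and X: "continuous_on {0..1} X" and Y: "continuous_on {0..1} Y" and XY: "X 0 = Y 0"
  shows "t \<in> {0..1} \<Longrightarrow> t < real n * \<delta> \<or> t = 0 \<Longrightarrow> (delayed \<delta> ^^ n) X t = (delayed \<delta> ^^ n) Y t"
proof (induction n arbitrary: t)
  case (Suc n)
  then show ?case
    unfolding funpow.simps o_def by (intro delayed_eq_if_eq_before[OF \<delta>]) auto
qed (use XY in auto)

lemma delayed_fixpoint_exists:
  assumes \<delta>: "\<delta> > 0"
  obtains B where "continuous_on {0..1} B" "\<And>t. t \<in> {0..1} \<Longrightarrow> B t = delayed \<delta> B t"
proof -
  obtain n :: nat where n: "real n * \<delta> > 1"
    using reals_Archimedean3[OF \<delta>] by blast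
  define Z where "Z = (\<lambda>t::real. f 0)"
  have cont_iter: "continuous_on {0..1} ((delayed \<delta> ^^ m) Z)" for m
    by (induction m) (auto intro: continuous_on_delayed \<delta>[THEN less_imp_le] simp: Z_def)
  show ?thesis
  proof (rule that[of "(delayed \<delta> ^^ n) Z"])
    fix t :: real assume t: "t \<in> {0..1}"
    have "(delayed \<delta> ^^ n) (delayed \<delta> Z) t = (delayed \<delta> ^^ n) Z t"
      using delayed_iterate_eq_before[OF \<delta> cont_iter[of 1] cont_iter[of 0]] t n
      by (simp add: delayed_at_0 Z_def)
    then show "(delayed \<delta> ^^ n) Z t = delayed \<delta> ((delayed \<delta> ^^ n) Z) t"
      by (simp add: funpow_swap1)
  qed (rule cont_iter)
qed

lemma delayed_integrand_exp_bound:
  assumes \<delta>: "\<delta> \<ge> 0" and l: "l \<ge> 0" and j: "j \<in> J" and s: "s \<in> {0..1}"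
    and B: "\<And>r. r \<in> {0..1} \<Longrightarrow> \<bar>B r\<bar> \<le> \<mu> * exp (l * W r)" and \<mu>: "\<mu> \<ge> 0"
  shows "\<bar>h j s (B (max 0 (s - \<delta>)))\<bar> \<le> c + c * \<mu> * exp (l * W s)"
proof -
  let ?r = "max 0 (s - \<delta>)"
  have r: "?r \<in> {0..1}" "?r \<le> s" using s \<delta> by auto
  have "exp (l * W ?r) \<le> exp (l * W s)"
    using mono_onD[OF mono_W r(1) s r(2)] l by (simp add: mult_left_mono)
  then have "\<bar>B ?r\<bar> \<le> \<mu> * exp (l * W s)"
    using B[OF r(1)] \<mu> by (meson mult_left_mono order_trans)
  then have "c * (1 + \<bar>B ?r\<bar>) \<le> c * (1 + \<mu> * exp (l * W s))"
    using c_nonneg by (intro mult_left_mono) auto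
  then show ?thesis
    using growth_h[OF j s, of "B ?r"] by (simp add: algebra_simps)
qed

lemma delayed_fixpoint_bound:
  assumes \<delta>: "\<delta> \<ge> 0" and B: "continuous_on {0..1} B" and fixed: "\<And>t. t \<in> {0..1} \<Longrightarrow> B t = delayed \<delta> B t"
    and f_bound: "\<And>s. s \<in> {0..1} \<Longrightarrow> \<bar>f s\<bar> \<le> F" and t: "t \<in> {0..1}"
  shows "\<bar>B t\<bar> \<le> 2 * (F + c * (W 1 - W 0)) * exp ((2*c+1) * (W 1 - W 0))"
proof -
  define l where "l = 2*c+1"
  define a where "a = F + c * (W 1 - W 0)"
  have W01: "W t \<le> W 1" "W 0 \<le> W t" using mono_onD[OF mono_W] t by auto
  have a0: "a \<ge> 0" unfolding a_def using f_bound[of 0] c_nonneg W01 by auto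
  have "\<bar>B t\<bar> \<le> 2 * a * exp (l * (W t - W 0))"
    unfolding l_def
  proof (rule gronwall_stieltjes[OF mono_W continuous_W _ _ a0 c_nonneg _ t])
    fix \<mu> :: real assume \<mu>: "\<mu> \<ge> 0" and hb: "\<forall>s\<in>{0..1}. \<bar>B s\<bar> \<le> \<mu> * exp ((2*c+1) * W s)"
    define \<psi> where "\<psi> s = c + (c * \<mu>) * exp (l * W s)" for s
    have \<psi>: "continuous_on {0..1} \<psi>" unfolding \<psi>_def[abs_def] by (intro continuous_intros continuous_W)
    have integrand_le: "\<bar>h j s (B (max 0 (s - \<delta>)))\<bar> \<le> \<psi> s" if "j \<in> J" "s \<in> {0..1}" for j s
      using delayed_integrand_exp_bound[OF \<delta> _ that, of l B \<mu>] hb \<mu> c_nonneg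
      unfolding \<psi>_def l_def by simp
    show "\<forall>t\<in>{0..1}. \<bar>B t\<bar> \<le> a + c * \<mu> * stieltjes W (\<lambda>s. exp ((2*c+1) * W s)) t"
    proof
      fix t :: real assume t: "t \<in> {0..1}"
      have "\<bar>B t\<bar> \<le> \<bar>f t\<bar> + \<bar>\<Sum>j\<in>J. stieltjes (M j) (\<lambda>s. h j s (B (max 0 (s - \<delta>)))) t\<bar>"
        using fixed[OF t] unfolding delayed_def by linarith
      also have "\<dots> \<le> F + stieltjes W \<psi> t"
        using abs_sum_stieltjes_le[of "\<lambda>j s. h j s (B (max 0 (s - \<delta>)))",
            OF continuous_on_delayed_integrand[OF \<delta> B] \<psi> integrand_le t]
          f_bound[OF t] by linarith
      also have "stieltjes W \<psi> t = c * (W t - W 0) + c * \<mu> * stieltjes W (\<lambda>s. exp (l * W s)) t"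
        unfolding \<psi>_def using stieltjes_add[OF mono_W] stieltjes_const[OF mono_W] stieltjes_cmult t
        by (simp add: continuous_intros continuous_W)
      also have "c * (W t - W 0) \<le> c * (W 1 - W 0)"
        using mono_onD[OF mono_W, of t 1] t c_nonneg by (auto intro: mult_left_mono)
      finally show "\<bar>B t\<bar> \<le> a + c * \<mu> * stieltjes W (\<lambda>s. exp ((2*c+1) * W s)) t"
        unfolding a_def l_def by simp
    qed
  qed (use B in \<open>auto intro: continuous_intros\<close>)
  also have "\<dots> \<le> 2 * a * exp (l * (W 1 - W 0))"
    using W01 c_nonneg a0 unfolding l_def by (auto intro!: mult_left_mono)
  finally show ?thesis unfolding a_def l_def .
qed

lemma delayed_fixpoint_modulus:
  assumes \<delta>: "\<delta> \<ge> 0" and B: "continuous_on {0..1} B" and fixed: "\<And>t. t \<in> {0..1} \<Longrightarrow> B t = delayed \<delta> B t"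
    and R: "\<And>s. s \<in> {0..1} \<Longrightarrow> \<bar>B s\<bar> \<le> R" and t: "t \<in> {0..1}" and y: "y \<in> {0..1}"
  shows "\<bar>B t - B y\<bar> \<le> \<bar>f t - f y\<bar> + c * (1 + R) * (\<Sum>j\<in>J. \<bar>M j t - M j y\<bar>)"
proof -
  let ?\<phi> = "\<lambda>j s. h j s (B (max 0 (s - \<delta>)))"
  have \<phi>_bound: "\<bar>?\<phi> j s\<bar> \<le> c * (1 + R)" if j: "j \<in> J" and s: "s \<in> {0..1}" for j s
  proof -
    have "c * (1 + \<bar>B (max 0 (s - \<delta>))\<bar>) \<le> c * (1 + R)"
      using R[of "max 0 (s - \<delta>)"] s \<delta> c_nonneg by (simp add: mult_left_mono)
    then show ?thesis using growth_h[OF j s, of "B (max 0 (s - \<delta>))"] by linarith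
  qed
  have "B t - B y = (f t - f y) + (\<Sum>j\<in>J. stieltjes (M j) (?\<phi> j) t - stieltjes (M j) (?\<phi> j) y)"
    using fixed[OF t] fixed[OF y] unfolding delayed_def sum_subtractf by simp
  then have "\<bar>B t - B y\<bar> \<le> \<bar>f t - f y\<bar> + (\<Sum>j\<in>J. \<bar>stieltjes (M j) (?\<phi> j) t - stieltjes (M j) (?\<phi> j) y\<bar>)"
    using sum_abs[of "\<lambda>j. stieltjes (M j) (?\<phi> j) t - stieltjes (M j) (?\<phi> j) y" J] by linarith
  also have "\<dots> \<le> \<bar>f t - f y\<bar> + (\<Sum>j\<in>J. c * (1 + R) * \<bar>M j t - M j y\<bar>)"
    by (intro add_left_mono sum_mono stieltjes_lipschitz[OF mono_M continuous_on_delayed_integrand[OF \<delta> B]])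
       (use \<phi>_bound t y in auto)
  finally show ?thesis by (simp add: sum_distrib_left)
qed

lemma delayed_fixpoints_equicontinuous:
  assumes \<delta>: "\<And>n. \<delta> n \<ge> 0" and B: "\<And>n. continuous_on {0..1} (B n)"
    and fixed: "\<And>n t. t \<in> {0..1} \<Longrightarrow> B n t = delayed (\<delta> n) (B n) t"
    and R: "\<And>n s. s \<in> {0..1} \<Longrightarrow> \<bar>B n s\<bar> \<le> R" and x: "x \<in> {0..1}" and e: "e > 0"
  shows "\<exists>d. 0 < d \<and> (\<forall>n y. y \<in> {0..1} \<and> norm (x - y) < d \<longrightarrow> norm (B n x - B n y) < e)"
proof -
  define G where "G y = \<bar>f x - f y\<bar> + c * (1 + R) * (\<Sum>j\<in>J. \<bar>M j x - M j y\<bar>)" for y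
  have "continuous_on {0..1} G" unfolding G_def[abs_def]
    by (intro continuous_intros continuous_f continuous_on_sum) (auto intro: continuous_intros continuous_M)
  then obtain d where d: "d > 0" "\<forall>y\<in>{0..1}. dist y x < d \<longrightarrow> dist (G y) (G x) < e"
    using x e unfolding continuous_on_iff by blast
  have "G x = 0" unfolding G_def by simp
  have "\<bar>B n x - B n y\<bar> < e" if y: "y \<in> {0..1}" "\<bar>x - y\<bar> < d" for n y
  proof -
    have "G y < e" using d(2) y \<open>G x = 0\<close> by (auto simp: dist_real_def abs_minus_commute)
    then show ?thesis using delayed_fixpoint_modulus[OF \<delta>[of n] B[of n] fixed[where n=n] R[where n=n] x y(1)]
      unfolding G_def by linarith
  qed
  then show ?thesis using d(1) by auto
qed

text \<open>Uniform continuity of \<open>h\<close> on the compact set \<open>[0,1] \<times> [-R,R]\<close> and of the limit \<open>Y\<close> on \<open>[0,1]\<close>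
  turns uniform convergence of \<open>X n\<close> and vanishing delays into uniform convergence of the
  delayed integrands.\<close>
lemma delayed_integrands_converge:
  assumes j: "j \<in> J" and Y: "continuous_on {0..1} Y"
    and X_bound: "\<And>n s. s \<in> {0..1} \<Longrightarrow> \<bar>X n s\<bar> \<le> R" and lim_bound: "\<And>s. s \<in> {0..1} \<Longrightarrow> \<bar>Y s\<bar> \<le> R"
    and uniform: "\<And>e. 0 < e \<Longrightarrow> \<exists>N. \<forall>n x. n \<ge> N \<and> x \<in> {0..1} \<longrightarrow> \<bar>X n x - Y x\<bar> < e"
    and \<delta>: "\<delta> \<longlonglongrightarrow> 0" "\<And>n. \<delta> n \<ge> 0" and e: "e > 0"
  shows "eventually (\<lambda>n. \<forall>s\<in>{0..1}. \<bar>h j s (X n (max 0 (s - \<delta> n))) - h j s (Y s)\<bar> \<le> e) sequentially"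
proof -
  define K where "K = {0..1::real} \<times> {-R..R}"
  have "continuous_on K (\<lambda>(t, \<xi>). h j t \<xi>)"
    by (rule continuous_on_subset[OF continuous_h[OF j]]) (auto simp: K_def)
  then have "uniformly_continuous_on K (\<lambda>(t, \<xi>). h j t \<xi>)"
    by (rule compact_uniformly_continuous) (simp add: K_def compact_Times)
  then obtain \<eta> where \<eta>: "\<eta> > 0"
    "\<forall>p\<in>K. \<forall>p'\<in>K. dist p' p < \<eta> \<longrightarrow> dist ((\<lambda>(t, \<xi>). h j t \<xi>) p') ((\<lambda>(t, \<xi>). h j t \<xi>) p) < e"
    unfolding uniformly_continuous_on_def using e by metis
  obtain \<rho> where \<rho>: "\<rho> > 0" "\<And>x y. x \<in> {0..1} \<Longrightarrow> y \<in> {0..1} \<Longrightarrow> \<bar>x - y\<bar> < \<rho> \<Longrightarrow> \<bar>Y x - Y y\<bar> < \<eta>/2"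
    using continuous_on_Icc_uniformly[OF Y, of "\<eta>/2"] \<eta>(1) by auto
  obtain N where N: "\<And>n x. n \<ge> N \<Longrightarrow> x \<in> {0..1} \<Longrightarrow> \<bar>X n x - Y x\<bar> < \<eta>/2"
    using uniform[of "\<eta>/2"] \<eta>(1) by auto
  have "eventually (\<lambda>n. n \<ge> N \<and> \<delta> n < \<rho>) sequentially"
    using eventually_ge_at_top order_tendstoD(2)[OF \<delta>(1) \<rho>(1)] by (rule eventually_conj)
  then show ?thesis
  proof eventually_elim
    case (elim n)
    show ?case
    proof
      fix s :: real assume s: "s \<in> {0..1}"
      define r where "r = max 0 (s - \<delta> n)"
      have r: "r \<in> {0..1}" "\<bar>r - s\<bar> < \<rho>" using s \<delta>(2)[of n] elim unfolding r_def by auto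
      have "\<bar>X n r - Y r\<bar> < \<eta>/2" using N[of n r] r(1) elim by simp
      then have "\<bar>X n r - Y s\<bar> < \<eta>" using \<rho>(2)[OF r(1) s r(2)] by linarith
      moreover have "(s, X n r) \<in> K" "(s, Y s) \<in> K"
        using X_bound[OF r(1), of n] lim_bound[OF s] s unfolding K_def by (auto simp: abs_le_iff)
      ultimately have "dist (h j s (X n r)) (h j s (Y s)) < e"
        using \<eta>(2) by (fastforce simp: dist_Pair_Pair dist_real_def)
      then show "\<bar>h j s (X n (max 0 (s - \<delta> n))) - h j s (Y s)\<bar> \<le> e"
        unfolding r_def[symmetric] by (simp add: dist_real_def)
    qed
  qed
qed

lemma solves_limit_of_delayed_fixpoints:
  assumes \<delta>: "\<And>n. \<delta> n > 0" "\<delta> \<longlonglongrightarrow> 0" and B: "\<And>n. continuous_on {0..1} (B n)"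
    and fixed: "\<And>n t. t \<in> {0..1} \<Longrightarrow> B n t = delayed (\<delta> n) (B n) t"
    and B_bound: "\<And>n s. s \<in> {0..1} \<Longrightarrow> \<bar>B n s\<bar> \<le> R" and X: "continuous_on {0..1} X"
    and uniform: "\<And>e. 0 < e \<Longrightarrow> \<exists>N. \<forall>n x. n \<ge> N \<and> x \<in> {0..1} \<longrightarrow> \<bar>B n x - X x\<bar> < e"
  shows "solves X"
proof -
  have B_tendsto: "(\<lambda>n. B n t) \<longlonglongrightarrow> X t" if "t \<in> {0..1}" for t
  proof (rule LIMSEQ_I)
    fix e :: real assume "e > 0"
    then obtain N where "\<forall>n x. n \<ge> N \<and> x \<in> {0..1} \<longrightarrow> \<bar>B n x - X x\<bar> < e"
      using uniform by blast
    then show "\<exists>N. \<forall>n\<ge>N. norm (B n t - X t) < e" using that by auto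
  qed
  have X_bound: "\<bar>X s\<bar> \<le> R + 1" if s: "s \<in> {0..1}" for s
  proof -
    obtain N where "\<forall>n x. n \<ge> N \<and> x \<in> {0..1} \<longrightarrow> \<bar>B n x - X x\<bar> < 1"
      using uniform[of 1] by auto
    then show ?thesis using B_bound[OF s, of N] s by fastforce
  qed
  have "X t = f t + (\<Sum>j\<in>J. stieltjes (M j) (\<lambda>s. h j s (X s)) t)" if t: "t \<in> {0..1}" for t
  proof (rule LIMSEQ_unique[OF B_tendsto[OF t]])
    have "(\<lambda>n. stieltjes (M j) (\<lambda>s. h j s (B n (max 0 (s - \<delta> n)))) t)
            \<longlonglongrightarrow> stieltjes (M j) (\<lambda>s. h j s (X s)) t" if j: "j \<in> J" for j
    proof (rule stieltjes_tendsto_uniform[OF mono_M[OF j]])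
      show "continuous_on {0..1} (\<lambda>s. h j s (X s))"
        by (rule continuous_on_comp_curve[OF continuous_h[OF j] X])
      show "eventually (\<lambda>n. \<forall>s\<in>{0..1}. \<bar>h j s (B n (max 0 (s - \<delta> n))) - h j s (X s)\<bar> \<le> e) sequentially"
        if "e > 0" for e
      proof (rule delayed_integrands_converge[OF j X _ X_bound uniform \<delta>(2) less_imp_le[OF \<delta>(1)] that])
        show "\<bar>B n s\<bar> \<le> R + 1" if "s \<in> {0..1}" for n s
          using B_bound[OF that, of n] by linarith
      qed
    qed (use continuous_on_delayed_integrand[OF less_imp_le[OF \<delta>(1)] B] j t in auto)
    then have "(\<lambda>n. delayed (\<delta> n) (B n) t) \<longlonglongrightarrow> f t + (\<Sum>j\<in>J. stieltjes (M j) (\<lambda>s. h j s (X s)) t)"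
      unfolding delayed_def by (intro tendsto_add tendsto_const tendsto_sum)
    then show "(\<lambda>n. B n t) \<longlonglongrightarrow> f t + (\<Sum>j\<in>J. stieltjes (M j) (\<lambda>s. h j s (X s)) t)"
      using fixed[OF t] by simp
  qed
  then show ?thesis using X unfolding solves_def by blast
qed

theorem solution_exists: "\<exists>B. solves B"
proof -
  obtain F where F: "\<And>s. s \<in> {0..1} \<Longrightarrow> \<bar>f s\<bar> \<le> F"
    using continuous_on_Icc_bounded[OF continuous_f] by blast
  define R where "R = 2 * (F + c * (W 1 - W 0)) * exp ((2*c+1) * (W 1 - W 0))"
  define \<delta> where "\<delta> N = inverse (real (Suc N))" for N
  have \<delta>: "\<delta> N > 0" for N unfolding \<delta>_def by simp
  have "\<forall>N. \<exists>B. continuous_on {0..1} B \<and> (\<forall>t\<in>{0..1}. B t = delayed (\<delta> N) B t)"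
  proof
    fix N
    obtain B where "continuous_on {0..1} B" "\<And>t. t \<in> {0..1} \<Longrightarrow> B t = delayed (\<delta> N) B t"
      using delayed_fixpoint_exists[OF \<delta>[of N]] by blast
    then show "\<exists>B. continuous_on {0..1} B \<and> (\<forall>t\<in>{0..1}. B t = delayed (\<delta> N) B t)" by blast
  qed
  then obtain B where B: "\<And>N. continuous_on {0..1} (B N)"
    and fixed: "\<And>N t. t \<in> {0..1} \<Longrightarrow> B N t = delayed (\<delta> N) (B N) t"
    by metis
  have B_bound: "\<bar>B N t\<bar> \<le> R" if "t \<in> {0..1}" for N t
    unfolding R_def by (rule delayed_fixpoint_bound[OF less_imp_le[OF \<delta>] B fixed F that])
  have norm_bound: "norm (B n x) \<le> R" if "x \<in> {0..1}" for n x
    using B_bound[OF that] by simp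
  have equicontinuous: "\<exists>d. 0 < d \<and> (\<forall>n y. y \<in> {0..1} \<and> norm (x - y) < d \<longrightarrow> norm (B n x - B n y) < e)"
    if "x \<in> {0..1}" "0 < e" for x e
    using delayed_fixpoints_equicontinuous[where \<delta>=\<delta> and B=B and R=R,
        OF less_imp_le[OF \<delta>] B fixed B_bound that] .
  obtain X k where X: "continuous_on {0..1} X" and k: "strict_mono (k :: nat \<Rightarrow> nat)"
    and uniform: "\<And>e. 0 < e \<Longrightarrow> \<exists>N. \<forall>n x. n \<ge> N \<and> x \<in> {0..1} \<longrightarrow> norm (B (k n) x - X x) < e"
    using Arzela_Ascoli[OF compact_Icc norm_bound equicontinuous] by blast
  have "(\<lambda>n. \<delta> (k n)) \<longlonglongrightarrow> 0"
    using LIMSEQ_subseq_LIMSEQ[OF LIMSEQ_inverse_real_of_nat k] unfolding \<delta>_def o_def .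
  then have "solves X"
    using uniform by (intro solves_limit_of_delayed_fixpoints[where B="\<lambda>n. B (k n)" and R=R]) (auto intro: \<delta> B fixed B_bound X)
  then show ?thesis by blast
qed

lemma lipschitz_constant_along:
  assumes lip: "\<forall>p>0. \<exists>L\<ge>0. \<forall>j\<in>J. \<forall>\<xi>\<in>{-p..p}. \<forall>\<zeta>\<in>{-p..p}. \<forall>t\<in>{0..1}. \<bar>h j t \<xi> - h j t \<zeta>\<bar> \<le> L * \<bar>\<xi> - \<zeta>\<bar>"
    and B1: "continuous_on {0..1} B1" and B2: "continuous_on {0..1} B2"
  obtains L where "L \<ge> 0" "\<And>j s. j \<in> J \<Longrightarrow> s \<in> {0..1} \<Longrightarrow> \<bar>h j s (B1 s) - h j s (B2 s)\<bar> \<le> L * \<bar>B1 s - B2 s\<bar>"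
proof -
  obtain K1 where K1: "K1 \<ge> 0" "\<And>s. s \<in> {0..1} \<Longrightarrow> \<bar>B1 s\<bar> \<le> K1"
    using continuous_on_Icc_bounded[OF B1] by blast
  obtain K2 where K2: "K2 \<ge> 0" "\<And>s. s \<in> {0..1} \<Longrightarrow> \<bar>B2 s\<bar> \<le> K2"
    using continuous_on_Icc_bounded[OF B2] by blast
  define p where "p = K1 + K2 + 1"
  have range: "B1 s \<in> {-p..p}" "B2 s \<in> {-p..p}" if "s \<in> {0..1}" for s
    using K1(2)[OF that] K2(2)[OF that] K1(1) K2(1) unfolding p_def by (auto simp: abs_le_iff)
  have "p > 0" unfolding p_def using K1(1) K2(1) by simp
  then obtain L where "L \<ge> 0"
    "\<forall>j\<in>J. \<forall>\<xi>\<in>{-p..p}. \<forall>\<zeta>\<in>{-p..p}. \<forall>t\<in>{0..1}. \<bar>h j t \<xi> - h j t \<zeta>\<bar> \<le> L * \<bar>\<xi> - \<zeta>\<bar>"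
    using lip by blast
  then show ?thesis using that range by blast
qed

lemma solutions_diff_le:
  assumes B1: "solves B1" and B2: "solves B2" and L: "L \<ge> 0"
    and lip: "\<And>j s. j \<in> J \<Longrightarrow> s \<in> {0..1} \<Longrightarrow> \<bar>h j s (B1 s) - h j s (B2 s)\<bar> \<le> L * \<bar>B1 s - B2 s\<bar>"
    and t: "t \<in> {0..1}"
  shows "\<bar>B1 t - B2 t\<bar> \<le> stieltjes W (\<lambda>s. L * \<bar>B1 s - B2 s\<bar>) t"
proof -
  have c1: "continuous_on {0..1} B1" and c2: "continuous_on {0..1} B2"
    using B1 B2 unfolding solves_def by auto
  have hc: "continuous_on {0..1} (\<lambda>s. h j s (B s))" if "j \<in> J" "continuous_on {0..1} B" for j B
    using continuous_on_comp_curve[OF continuous_h[OF that(1)] that(2)] .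
  have "B1 t - B2 t = (\<Sum>j\<in>J. stieltjes (M j) (\<lambda>s. h j s (B1 s)) t - stieltjes (M j) (\<lambda>s. h j s (B2 s)) t)"
    using B1 B2 t unfolding solves_def by (simp add: sum_subtractf)
  also have "\<dots> = (\<Sum>j\<in>J. stieltjes (M j) (\<lambda>s. h j s (B1 s) - h j s (B2 s)) t)"
    by (intro sum.cong refl stieltjes_diff[symmetric] mono_M hc c1 c2)
  finally have "\<bar>B1 t - B2 t\<bar> = \<bar>\<Sum>j\<in>J. stieltjes (M j) (\<lambda>s. h j s (B1 s) - h j s (B2 s)) t\<bar>" by simp
  also have "\<dots> \<le> stieltjes W (\<lambda>s. L * \<bar>B1 s - B2 s\<bar>) t"
    by (rule abs_sum_stieltjes_le[OF _ _ lip t]) (auto intro!: continuous_intros hc c1 c2)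
  finally show ?thesis .
qed

theorem solution_unique:
  assumes lip: "\<forall>p>0. \<exists>L\<ge>0. \<forall>j\<in>J. \<forall>\<xi>\<in>{-p..p}. \<forall>\<zeta>\<in>{-p..p}. \<forall>t\<in>{0..1}. \<bar>h j t \<xi> - h j t \<zeta>\<bar> \<le> L * \<bar>\<xi> - \<zeta>\<bar>"
    and B1: "solves B1" and B2: "solves B2" and t: "t \<in> {0..1}"
  shows "B1 t = B2 t"
proof -
  have c1: "continuous_on {0..1} B1" and c2: "continuous_on {0..1} B2"
    using B1 B2 unfolding solves_def by auto
  obtain L where L: "L \<ge> 0"
    and lip_B: "\<And>j s. j \<in> J \<Longrightarrow> s \<in> {0..1} \<Longrightarrow> \<bar>h j s (B1 s) - h j s (B2 s)\<bar> \<le> L * \<bar>B1 s - B2 s\<bar>"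
    using lipschitz_constant_along[OF lip c1 c2] by blast
  define D where "D s = \<bar>B1 s - B2 s\<bar>" for s
  have D: "continuous_on {0..1} D" unfolding D_def[abs_def] by (intro continuous_intros c1 c2)
  have "D t \<le> 2 * 0 * exp ((2*L+1) * (W t - W 0))"
  proof (rule gronwall_stieltjes[OF mono_W continuous_W D _ order_refl L _ t])
    fix \<mu> :: real assume "\<mu> \<ge> 0" and D_le: "\<forall>s\<in>{0..1}. D s \<le> \<mu> * exp ((2*L+1) * W s)"
    show "\<forall>t'\<in>{0..1}. D t' \<le> 0 + L * \<mu> * stieltjes W (\<lambda>s. exp ((2*L+1) * W s)) t'"
    proof
      fix t' :: real assume t': "t' \<in> {0..1}"
      have "D t' \<le> stieltjes W (\<lambda>s. L * D s) t'"
        using solutions_diff_le[OF B1 B2 L lip_B t'] unfolding D_def .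
      also have "\<dots> \<le> stieltjes W (\<lambda>s. (L * \<mu>) * exp ((2*L+1) * W s)) t'"
      proof (rule stieltjes_mono[OF mono_W])
        fix s :: real assume "s \<in> {0..1}"
        then show "L * D s \<le> (L * \<mu>) * exp ((2*L+1) * W s)"
          using D_le L mult_left_mono by (fastforce simp: mult.assoc)
      qed (intro continuous_intros D continuous_W)+
      also have "\<dots> = L * \<mu> * stieltjes W (\<lambda>s. exp ((2*L+1) * W s)) t'"
        by (rule stieltjes_cmult)
      finally show "D t' \<le> 0 + L * \<mu> * stieltjes W (\<lambda>s. exp ((2*L+1) * W s)) t'" by simp
    qed
  qed (simp add: D_def)
  then show ?thesis unfolding D_def by simp
qed

end

section \<open>Integrators of bounded variation\<close>

lemma has_RS_integral_Jordan:
  assumes P: "mono_on {0..1} P" and N: "mono_on {0..1} N" and A: "\<And>s. A s = P s - N s"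
    and \<phi>: "continuous_on {0..1} \<phi>" and t: "0 \<le> t" "t \<le> 1"
  shows "has_RS_integral \<phi> A 0 t (stieltjes P \<phi> t - stieltjes N \<phi> t)"
proof -
  have "A = (\<lambda>s. P s - N s)" using A by blast
  then show ?thesis
    using has_RS_integral_diff[OF has_RS_integral_stieltjes[OF P \<phi> t] has_RS_integral_stieltjes[OF N \<phi> t]]
    by simp
qed

lemma is_solution_iff_Jordan:
  assumes P: "\<And>i. i < d \<Longrightarrow> mono_on {0..1} (P i)" and N: "\<And>i. i < d \<Longrightarrow> mono_on {0..1} (N i)"
    and A: "\<And>i s. i < d \<Longrightarrow> A i s = P i s - N i s"
    and g: "\<And>i. i < d \<Longrightarrow> continuous_on ({0..1} \<times> UNIV) (\<lambda>(t, \<xi>). g i t \<xi>)"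
    and B: "continuous_on {0..1} B"
  shows "is_solution d A f g B \<longleftrightarrow> (\<forall>t\<in>{0..1}. B t = f t +
           (\<Sum>i<d. stieltjes (P i) (\<lambda>s. g i s (B s)) t - stieltjes (N i) (\<lambda>s. g i s (B s)) t))"
proof -
  have RS: "has_RS_integral (\<lambda>s. g i s (B s)) (A i) 0 t
              (stieltjes (P i) (\<lambda>s. g i s (B s)) t - stieltjes (N i) (\<lambda>s. g i s (B s)) t)"
    if "i < d" "t \<in> {0..1}" for i t
    using has_RS_integral_Jordan[OF P N A continuous_on_comp_curve[OF g B]] that by auto
  have "(\<Sum>i<d. RS_integral (\<lambda>s. g i s (B s)) (A i) 0 t)
          = (\<Sum>i<d. stieltjes (P i) (\<lambda>s. g i s (B s)) t - stieltjes (N i) (\<lambda>s. g i s (B s)) t)"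
    if "t \<in> {0..1}" for t
    using RS_integral_eqI(1)[OF _ RS] that by (intro sum.cong) auto
  then show ?thesis
    unfolding is_solution_def using RS_integral_eqI(2)[OF _ RS] by auto
qed

text \<open>The signed integrators \<open>dA\<^sub>i = dP\<^sub>i - dN\<^sub>i\<close> are replaced by the monotone ones
  \<open>dP\<^sub>i\<close> (index \<open>(i, True)\<close>, integrand \<open>g\<^sub>i\<close>) and \<open>dN\<^sub>i\<close> (index \<open>(i, False)\<close>, integrand \<open>-g\<^sub>i\<close>).\<close>
definition Jordan_integrators :: "(nat \<Rightarrow> real \<Rightarrow> real) \<Rightarrow> (nat \<Rightarrow> real \<Rightarrow> real) \<Rightarrow> nat \<times> bool \<Rightarrow> real \<Rightarrow> real" where
  "Jordan_integrators P N = (\<lambda>(i, b). if b then P i else N i)"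

definition Jordan_integrands :: "(nat \<Rightarrow> real \<Rightarrow> real \<Rightarrow> real) \<Rightarrow> nat \<times> bool \<Rightarrow> real \<Rightarrow> real \<Rightarrow> real" where
  "Jordan_integrands g = (\<lambda>(i, b). if b then g i else (\<lambda>t \<xi>. - g i t \<xi>))"

lemma sum_Jordan_stieltjes:
  "(\<Sum>j\<in>{..<d} \<times> UNIV. stieltjes (Jordan_integrators P N j) (\<lambda>s. Jordan_integrands g j s (X s)) t)
     = (\<Sum>i<d. stieltjes (P i) (\<lambda>s. g i s (X s)) t - stieltjes (N i) (\<lambda>s. g i s (X s)) t)"
proof -
  have "(\<Sum>j\<in>{..<d} \<times> UNIV. stieltjes (Jordan_integrators P N j) (\<lambda>s. Jordan_integrands g j s (X s)) t)
      = (\<Sum>i<d. \<Sum>b\<in>UNIV. stieltjes (Jordan_integrators P N (i, b)) (\<lambda>s. Jordan_integrands g (i, b) s (X s)) t)"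
    by (simp add: sum.cartesian_product)
  also have "\<dots> = (\<Sum>i<d. stieltjes (P i) (\<lambda>s. g i s (X s)) t - stieltjes (N i) (\<lambda>s. g i s (X s)) t)"
    by (rule sum.cong) (auto simp: UNIV_bool Jordan_integrators_def Jordan_integrands_def stieltjes_uminus)
  finally show ?thesis .
qed

lemma stieltjes_system_Jordan:
  assumes P: "\<And>i. i < d \<Longrightarrow> mono_on {0..1} (P i)" "\<And>i. i < d \<Longrightarrow> continuous_on {0..1} (P i)"
    and N: "\<And>i. i < d \<Longrightarrow> mono_on {0..1} (N i)" "\<And>i. i < d \<Longrightarrow> continuous_on {0..1} (N i)"
    and g: "\<And>i. i < d \<Longrightarrow> continuous_on ({0..1} \<times> UNIV) (\<lambda>(t, \<xi>). g i t \<xi>)"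
    and growth: "\<And>i t \<xi>. i < d \<Longrightarrow> t \<in> {0..1} \<Longrightarrow> \<bar>g i t \<xi>\<bar> \<le> c * (1 + \<bar>\<xi>\<bar>)"
    and c: "c \<ge> 0" and f: "continuous_on {0..1} f"
  shows "stieltjes_system ({..<d} \<times> UNIV) (Jordan_integrators P N) (Jordan_integrands g) f c"
proof
  fix j assume "j \<in> {..<d} \<times> (UNIV :: bool set)"
  then obtain i b where j: "j = (i, b)" "i < d" by auto
  have "continuous_on ({0..1} \<times> UNIV) (\<lambda>x. - (\<lambda>(t, \<xi>). g i t \<xi>) x)"
    by (intro continuous_on_minus g[OF j(2)])
  then show "continuous_on ({0..1} \<times> UNIV) (\<lambda>(t, \<xi>). Jordan_integrands g j t \<xi>)"
    using g[OF j(2)] unfolding j Jordan_integrands_def by (cases b) (auto simp: case_prod_beta)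
  show "mono_on {0..1} (Jordan_integrators P N j)" "continuous_on {0..1} (Jordan_integrators P N j)"
    using P N j(2) unfolding j Jordan_integrators_def by auto
  show "\<bar>Jordan_integrands g j t \<xi>\<bar> \<le> c * (1 + \<bar>\<xi>\<bar>)" if "t \<in> {0..1}" for t \<xi>
    using growth[OF j(2) that] unfolding j Jordan_integrands_def by auto
qed (use c f in auto)

lemma Jordan_decompositions:
  assumes "\<And>i. i < d \<Longrightarrow> continuous_on {0..1} (A i)" "\<And>i. i < d \<Longrightarrow> bounded_variation_on (A i) 0 1"
  obtains P N where "\<And>i. i < d \<Longrightarrow> mono_on {0..1} (P i)" "\<And>i. i < d \<Longrightarrow> continuous_on {0..1} (P i)"
    "\<And>i. i < d \<Longrightarrow> mono_on {0..1} (N i)" "\<And>i. i < d \<Longrightarrow> continuous_on {0..1} (N i)"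
    "\<And>i s. i < d \<Longrightarrow> A i s = P i s - N i s"
proof -
  have "\<exists>P N. mono_on {0..1} P \<and> mono_on {0..1} N \<and> continuous_on {0..1} P \<and>
          continuous_on {0..1} N \<and> (\<forall>s. A i s = P s - N s)" if i: "i < d" for i
  proof -
    obtain P N where "mono_on {0..1} P" "mono_on {0..1} N" "continuous_on {0..1} P"
        "continuous_on {0..1} N" "\<And>s. A i s = P s - N s"
      using bounded_variation_Jordan_decomposition[OF assms(1)[OF i] assms(2)[OF i]] by blast
    then show ?thesis by blast
  qed
  then have "\<forall>i. \<exists>P N. i < d \<longrightarrow> mono_on {0..1} P \<and> mono_on {0..1} N \<and>
          continuous_on {0..1} P \<and> continuous_on {0..1} N \<and> (\<forall>s. A i s = P s - N s)"
    by blast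
  then obtain P N where "\<And>i. i < d \<Longrightarrow> mono_on {0..1} (P i) \<and> mono_on {0..1} (N i) \<and>
      continuous_on {0..1} (P i) \<and> continuous_on {0..1} (N i) \<and> (\<forall>s. A i s = P i s - N i s)"
    by metis
  then show ?thesis by (intro that[of P N]) auto
qed

lemma Jordan_integrands_lipschitz:
  assumes "\<forall>p>0. \<exists>L\<ge>0. \<forall>i<d. \<forall>\<xi>\<in>{-p..p}. \<forall>\<zeta>\<in>{-p..p}. \<forall>t\<in>{0..1}.
             \<bar>g i t \<xi> - g i t \<zeta>\<bar> \<le> L * \<bar>\<xi> - \<zeta>\<bar>"
  shows "\<forall>p>0. \<exists>L\<ge>0. \<forall>j\<in>{..<d} \<times> UNIV. \<forall>\<xi>\<in>{-p..p}. \<forall>\<zeta>\<in>{-p..p}. \<forall>t\<in>{0..1}.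
           \<bar>Jordan_integrands g j t \<xi> - Jordan_integrands g j t \<zeta>\<bar> \<le> L * \<bar>\<xi> - \<zeta>\<bar>"
proof (intro allI impI)
  fix p :: real assume "p > 0"
  then obtain L where "L \<ge> 0"
    "\<forall>i<d. \<forall>\<xi>\<in>{-p..p}. \<forall>\<zeta>\<in>{-p..p}. \<forall>t\<in>{0..1}. \<bar>g i t \<xi> - g i t \<zeta>\<bar> \<le> L * \<bar>\<xi> - \<zeta>\<bar>"
    using assms by blast
  then show "\<exists>L\<ge>0. \<forall>j\<in>{..<d} \<times> UNIV. \<forall>\<xi>\<in>{-p..p}. \<forall>\<zeta>\<in>{-p..p}. \<forall>t\<in>{0..1}.
        \<bar>Jordan_integrands g j t \<xi> - Jordan_integrands g j t \<zeta>\<bar> \<le> L * \<bar>\<xi> - \<zeta>\<bar>"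
    by (auto simp: Jordan_integrands_def abs_minus_commute)
qed

theorem proposition3p3:
  fixes d :: nat and A :: "nat \<Rightarrow> real \<Rightarrow> real" and f :: "real \<Rightarrow> real"
    and g :: "nat \<Rightarrow> real \<Rightarrow> real \<Rightarrow> real" and c :: real
  assumes A_cont: "\<And>i. i < d \<Longrightarrow> continuous_on {0..1} (A i)"
    and A_bv: "\<And>i. i < d \<Longrightarrow> bounded_variation_on (A i) 0 1"
    and f_cont: "continuous_on {0..1} f"
    and g_cont: "\<And>i. i < d \<Longrightarrow> continuous_on ({0..1} \<times> UNIV) (\<lambda>(t, \<xi>). g i t \<xi>)"
    and c_nonneg: "c \<ge> 0"
    and growth: "\<And>i t \<xi>. i < d \<Longrightarrow> t \<in> {0..1} \<Longrightarrow> \<bar>g i t \<xi>\<bar> \<le> c * (1 + \<bar>\<xi>\<bar>)"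
  shows "(\<exists>B. continuous_on {0..1} B \<and> is_solution d A f g B) \<and>
         ((\<forall>p>0. \<exists>L\<ge>0. \<forall>i<d. \<forall>\<xi>\<in>{-p..p}. \<forall>\<zeta>\<in>{-p..p}. \<forall>t\<in>{0..1}.
              \<bar>g i t \<xi> - g i t \<zeta>\<bar> \<le> L * \<bar>\<xi> - \<zeta>\<bar>) \<longrightarrow>
          (\<forall>B1 B2. continuous_on {0..1} B1 \<and> is_solution d A f g B1 \<and>
                   continuous_on {0..1} B2 \<and> is_solution d A f g B2 \<longrightarrow>
                   (\<forall>t\<in>{0..1}. B1 t = B2 t)))"
proof -
  obtain P N where P: "\<And>i. i < d \<Longrightarrow> mono_on {0..1} (P i)" "\<And>i. i < d \<Longrightarrow> continuous_on {0..1} (P i)"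
    and N: "\<And>i. i < d \<Longrightarrow> mono_on {0..1} (N i)" "\<And>i. i < d \<Longrightarrow> continuous_on {0..1} (N i)"
    and A: "\<And>i s. i < d \<Longrightarrow> A i s = P i s - N i s"
    using Jordan_decompositions[of d A, OF A_cont A_bv] by blast
  interpret S: stieltjes_system "{..<d} \<times> UNIV" "Jordan_integrators P N" "Jordan_integrands g" f c
    by (rule stieltjes_system_Jordan[OF P N g_cont growth c_nonneg f_cont])
  have solution_iff: "continuous_on {0..1} B \<and> is_solution d A f g B \<longleftrightarrow> S.solves B" for B
    unfolding S.solves_def sum_Jordan_stieltjes
    using is_solution_iff_Jordan[where P=P and N=N and A=A and g=g, OF P(1) N(1) A g_cont] by blast
  show ?thesis
    using S.solution_exists S.solution_unique[OF Jordan_integrands_lipschitz] solution_iff by blast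
qed

end
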